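(* Let $k\ge1$ and consider the online ranking game with top-1 feedback where an oblivious adversary chooses $r_1,\dots,r_T\in\{0,1\}^m$. Let the learner run algorithm RTop-1F (described in the context) with $K=m^{-1/3}T^{2/3}$ and $\epsilon=\sqrt{1/(mK)}$. Then $$\mathbb{E}\Big[\sum_{t=1}^T Prec@k(\sigma_t,r_t)\Big]\ge\max_\sigma\sum_{t=1}^T Prec@k(\sigma,r_t)-O(km^{2/3}T^{2/3}),$$ the expectation being over the learner's random actions.
   Context: Objects are $\{1,\dots,m\}$; a ranking is a permutation $\sigma$ of $[m]$ with $\sigma(i)$ the rank of object $i$ and $\sigma^{-1}(j)$ the object at rank $j$. $Prec@k(\sigma,r)=\sum_{i=1}^m\mathbb{1}(\sigma(i)\le k)\,r(i)$ (a gain). Game: the oblivious adversary fixes $r_1,\dots,r_T$ in advance; at round $t$ the learner outputs $\sigma_t$ and observes only $r_t(\sigma_t^{-1}(1))$. Algorithm RTop-1F with parameters $K,\epsilon$: split $\{1,\dots,T\}$ into $K$ consecutive blocks $B_i=\{(i-1)T/K+1,\dots,iT/K\}$. Initialize $\hat s_0=\hat r_0=0\in\mathbb{R}^m$. For $i=1,\dots,K$: set $\hat s_i=\hat s_{i-1}+\hat r_{i-1}$; choose $m$ distinct time points $i_1,\dots,i_m$ from $B_i$ uniformly at random without replacement; for each $t\in B_i$: if $t=i_j$, output any permutation placing object $j$ at rank 1 and receive $r_{i_j}(j)$; otherwise sample $p_t$ uniformly from $[0,1/\epsilon]^m$ and output $\sigma_t=\arg\min_\sigma\sigma\cdot(\hat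 s_i+p_t)$ (here $\sigma$ is identified with $(\sigma(1),\dots,\sigma(m))$). At the end of the block set $\hat r_i=(r_{i_1}(1),\dots,r_{i_m}(m))$. *)

theory Defs
  imports "HOL-Probability.Probability" "HOL-Combinatorics.Permutations"
begin

text \<open>Objects and ranks are 1..m; a ranking sigma is a permutation of {1..m}
  (sigma i = rank of object i). Reward vectors r t :: nat => real, used on {1..m}.\<close>

definition prec_at :: "nat \<Rightarrow> nat \<Rightarrow> (nat \<Rightarrow> nat) \<Rightarrow> (nat \<Rightarrow> real) \<Rightarrow> real" where
  "prec_at m k \<sigma> r = (\<Sum>i\<in>{1..m}. if \<sigma> i \<le> k then r i else 0)"

definition block :: "nat \<Rightarrow> nat \<Rightarrow> nat \<Rightarrow> nat set" where
  "block T K i = {(i - 1) * (T div K) + 1 .. i * (T div K)}"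

definition block_of :: "nat \<Rightarrow> nat \<Rightarrow> nat \<Rightarrow> nat" where
  "block_of T K t = (t - 1) div (T div K) + 1"

text \<open>Choices of m distinct time points i_1..i_m in block i (object j explored at time f j).\<close>
definition probe_choices :: "nat \<Rightarrow> nat \<Rightarrow> nat \<Rightarrow> nat \<Rightarrow> (nat \<Rightarrow> nat) set" where
  "probe_choices m T K i = {f \<in> {1..m} \<rightarrow>\<^sub>E block T K i. inj_on f {1..m}}"

definition rtop1f_space :: "nat \<Rightarrow> nat \<Rightarrow> nat \<Rightarrow> real \<Rightarrow>
    ((nat \<Rightarrow> nat \<Rightarrow> nat) \<times> (nat \<Rightarrow> nat \<Rightarrow> real)) measure" where
  "rtop1f_space m T K \<epsilon> =
     (PiM {1..K} (\<lambda>i. measure_pmf (pmf_of_set (probe_choices m T K i))))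
     \<Otimes>\<^sub>M (PiM {1..T} (\<lambda>t. PiM {1..m} (\<lambda>j. uniform_measure lborel {0..1/\<epsilon>})))"

definition s_hat :: "(nat \<Rightarrow> nat \<Rightarrow> real) \<Rightarrow> (nat \<Rightarrow> nat \<Rightarrow> nat) \<Rightarrow> nat \<Rightarrow> nat \<Rightarrow> real" where
  "s_hat r I i j = (\<Sum>i'\<in>{1..<i}. r (I i' j) j)"

text \<open>The ranking output by RTop-1F at round t given the randomness (I, P).
  top1 t j is the (arbitrary) permutation output at an exploration round placing j at rank 1.\<close>
definition rtop1f_action :: "nat \<Rightarrow> nat \<Rightarrow> nat \<Rightarrow> (nat \<Rightarrow> nat \<Rightarrow> nat \<Rightarrow> nat) \<Rightarrow>
    (nat \<Rightarrow> nat \<Rightarrow> real) \<Rightarrow> (nat \<Rightarrow> nat \<Rightarrow> nat) \<times> (nat \<Rightarrow> nat \<Rightarrow> real) \<Rightarrow> nat \<Rightarrow> (nat \<Rightarrow> nat)" where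
  "rtop1f_action m T K top1 r \<omega> t =
     (let I = fst \<omega>; P = snd \<omega>; i = block_of T K t in
      if \<exists>j\<in>{1..m}. I i j = t then top1 t (THE j. j \<in> {1..m} \<and> I i j = t)
      else arg_min_on (\<lambda>\<sigma>. \<Sum>j\<in>{1..m}. real (\<sigma> j) * (s_hat r I i j + P t j))
             {\<sigma>. \<sigma> permutes {1..m}})"

end

theory Submission
  imports Defs
begin

(* RTop-1F is follow-the-perturbed-leader run on blocks of length L = T/K with estimated
   rewards. In a block at most m rounds explore, each costing at most k, so exploration
   loses at most K m k. The probe of object j in block i is a uniform point of the block and
   independent of the estimate s_i built from earlier blocks, so L times the probed reward is
   an unbiased estimate of the block reward: in expectation the learner gains as much as FPL
   facing the estimated rewards. For FPL, be-the-leader bounds the loss of the leader that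
   already knows the current block by k a, and the uniform perturbation on [0, a]^m makes the
   leaders before and after a block agree up to m k / a in expectation on that block. The regret is thus at
   most K m k + L (k a + K m k / a), which equals 3 k m^(2/3) T^(2/3) for K = m^(-1/3) T^(2/3)
   and a = 1/eps = sqrt (m K). *)

definition rankings :: "nat \<Rightarrow> (nat \<Rightarrow> nat) set" where
  "rankings m = {\<sigma>. \<sigma> permutes {1..m}}"

definition rank_cost :: "nat \<Rightarrow> (nat \<Rightarrow> real) \<Rightarrow> (nat \<Rightarrow> nat) \<Rightarrow> real" where
  "rank_cost m c \<sigma> = (\<Sum>j\<in>{1..m}. real (\<sigma> j) * c j)"

definition min_cost_ranking :: "nat \<Rightarrow> (nat \<Rightarrow> real) \<Rightarrow> (nat \<Rightarrow> nat)" where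
  "min_cost_ranking m c = arg_min_on (rank_cost m c) (rankings m)"

definition top_indicator :: "nat \<Rightarrow> (nat \<Rightarrow> nat) \<Rightarrow> nat \<Rightarrow> real" where
  "top_indicator k \<sigma> = (\<lambda>j. if \<sigma> j \<le> k then 1 else 0)"

definition dot :: "nat \<Rightarrow> (nat \<Rightarrow> real) \<Rightarrow> (nat \<Rightarrow> real) \<Rightarrow> real" where
  "dot m x y = (\<Sum>j\<in>{1..m}. x j * y j)"

definition leader_top :: "nat \<Rightarrow> nat \<Rightarrow> (nat \<Rightarrow> real) \<Rightarrow> nat \<Rightarrow> real" where
  "leader_top m k c = top_indicator k (min_cost_ranking m c)"

lemma prec_at_eq_dot: "prec_at m k \<sigma> r = dot m (top_indicator k \<sigma>) r"
  unfolding prec_at_def dot_def top_indicator_def by (intro sum.cong) auto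

lemma dot_add: "dot m g (\<lambda>j. u j + v j) = dot m g u + dot m g v"
  unfolding dot_def by (simp add: distrib_left sum.distrib)

lemma dot_top_indicator: "dot m (top_indicator k \<sigma>) c = (\<Sum>j\<in>{j\<in>{1..m}. \<sigma> j \<le> k}. c j)"
  unfolding dot_def top_indicator_def by (subst sum.inter_filter) (auto intro!: sum.cong)

lemma finite_rankings: "finite (rankings m)"
  unfolding rankings_def by (simp add: finite_permutations)

lemma rankings_nonempty: "rankings m \<noteq> {}"
  unfolding rankings_def using permutes_id by blast

lemma min_cost_ranking_in: "min_cost_ranking m c \<in> rankings m"
  unfolding min_cost_ranking_def using arg_min_if_finite(1)[OF finite_rankings rankings_nonempty]
    by blast

lemma min_cost_ranking_le: "\<tau> \<in> rankings m \<Longrightarrow> rank_cost m c (min_cost_ranking m c) \<le> rank_cost m c \<tau>"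
  unfolding min_cost_ranking_def
  using arg_min_if_finite(2)[OF finite_rankings rankings_nonempty, where f="rank_cost m c"]
    by (auto simp: not_less)

lemma min_cost_ranking_cong:
  assumes "\<And>j. j \<in> {1..m} \<Longrightarrow> c j = c' j"
  shows "min_cost_ranking m c = min_cost_ranking m c'"
proof -
  have "rank_cost m c = rank_cost m c'"
    unfolding rank_cost_def using assms by (intro ext sum.cong) auto
  then show ?thesis unfolding min_cost_ranking_def by simp
qed

lemma leader_top_cong:
  "(\<And>j. j \<in> {1..m} \<Longrightarrow> c j = c' j) \<Longrightarrow> leader_top m k c = leader_top m k c'"
  unfolding leader_top_def using min_cost_ranking_cong by metis

text \<open>Exchange argument: transposing two objects that a cost-minimal ranking puts in the
  wrong order would lower the cost by (\<sigma> a - \<sigma> b) (c a - c b).\<close>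
lemma min_cost_rank_less:
  assumes \<sigma>: "\<sigma> \<in> rankings m" and min: "\<And>\<tau>. \<tau> \<in> rankings m \<Longrightarrow> rank_cost m c \<sigma> \<le> rank_cost m c \<tau>"
    and a: "a \<in> {1..m}" and b: "b \<in> {1..m}" and cab: "c a > c b"
  shows "\<sigma> a < \<sigma> b"
proof (rule ccontr)
  assume "\<not> \<sigma> a < \<sigma> b"
  moreover have ab: "a \<noteq> b" using cab by auto
  moreover have sp: "\<sigma> permutes {1..m}" using \<sigma> unfolding rankings_def by simp
  moreover have "\<sigma> a \<noteq> \<sigma> b" using permutes_inj[OF sp] ab by (simp add: inj_eq)
  ultimately have lt: "\<sigma> b < \<sigma> a" by simp
  define \<tau> where "\<tau> = \<sigma> \<circ> Transposition.transpose a b"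
  have \<tau>: "\<tau> \<in> rankings m" unfolding \<tau>_def rankings_def
    using permutes_compose[OF permutes_swap_id[OF a b] sp] by simp
  define d where "d = (\<lambda>j. (real (\<tau> j) - real (\<sigma> j)) * c j)"
  have "rank_cost m c \<tau> - rank_cost m c \<sigma> = (\<Sum>j\<in>{1..m}. d j)"
    unfolding rank_cost_def d_def by (simp only: sum_subtractf[symmetric] left_diff_distrib)
  also have "\<dots> = (\<Sum>j\<in>{a,b}. d j)"
    by (rule sum.mono_neutral_right) (use a b in \<open>auto simp: d_def \<tau>_def\<close>)
  also have "\<dots> = (real (\<sigma> b) - real (\<sigma> a)) * (c a - c b)"
    using ab by (simp add: d_def \<tau>_def algebra_simps)
  also have "\<dots> < 0" using lt cab by (simp add: mult_neg_pos)
  finally show False using min[OF \<tau>] by simp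
qed

lemma card_top_ranked:
  assumes "\<sigma> \<in> rankings m"
  shows "card {j\<in>{1..m}. \<sigma> j \<le> k} = card {y\<in>{1..m}. y \<le> k}"
proof -
  have p: "\<sigma> permutes {1..m}" using assms unfolding rankings_def by auto
  have "\<sigma> ` {j\<in>{1..m}. \<sigma> j \<le> k} = {y\<in>{1..m}. y \<le> k}"
  proof (intro subset_antisym subsetI)
    fix y assume y: "y \<in> {y\<in>{1..m}. y \<le> k}"
    then have "y \<in> \<sigma> ` {1..m}" unfolding permutes_image[OF p] by simp
    then obtain x where "x \<in> {1..m}" "y = \<sigma> x" by blast
    then show "y \<in> \<sigma> ` {j\<in>{1..m}. \<sigma> j \<le> k}" using y by blast
  next
    fix y assume "y \<in> \<sigma> ` {j\<in>{1..m}. \<sigma> j \<le> k}"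
    then show "y \<in> {y\<in>{1..m}. y \<le> k}" using permutes_in_image[OF p] by blast
  qed
  moreover have "inj_on \<sigma> {j\<in>{1..m}. \<sigma> j \<le> k}"
    using permutes_inj[OF p] by (auto intro: inj_on_subset)
  ultimately show ?thesis using card_image by fastforce
qed

text \<open>Rearrangement: the top-k set of a cost-minimal ranking maximises the total cost of
  k ranked objects, because every object it contains costs at least as much as every
  object it omits.\<close>
lemma dot_top_indicator_le_min_cost:
  assumes \<sigma>: "\<sigma> \<in> rankings m" and min: "\<And>\<tau>. \<tau> \<in> rankings m \<Longrightarrow> rank_cost m c \<sigma> \<le> rank_cost m c \<tau>"
    and \<tau>: "\<tau> \<in> rankings m"
  shows "dot m (top_indicator k \<tau>) c \<le> dot m (top_indicator k \<sigma>) c"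
proof -
  define S where "S = {j\<in>{1..m}. \<sigma> j \<le> k}"
  define U where "U = {j\<in>{1..m}. \<tau> j \<le> k}"
  have fS: "finite S" and fU: "finite U" unfolding S_def U_def by auto
  have dom: "c b \<le> c a" if "a \<in> S - U" "b \<in> U - S" for a b
  proof (rule ccontr)
    assume "\<not> c b \<le> c a"
    then have "\<sigma> b < \<sigma> a" using min_cost_rank_less[OF \<sigma> min, of b a] that unfolding S_def U_def
      by auto
    then show False using that unfolding S_def U_def by auto
  qed
  have "card S = card U" unfolding S_def U_def
    using card_top_ranked[OF \<sigma>] card_top_ranked[OF \<tau>] by simp
  then have "card (U - S) = card (S - U)"
    using fS fU by (simp add: card_Diff_subset_Int Int_commute)
  then obtain h where h: "bij_betw h (U - S) (S - U)"
    using finite_same_card_bij[of "U - S" "S - U"] fS fU by auto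
  have "(\<Sum>j\<in>U - S. c j) \<le> (\<Sum>j\<in>U - S. c (h j))"
    by (rule sum_mono) (use dom h in \<open>auto simp: bij_betw_def\<close>)
  also have "\<dots> = (\<Sum>j\<in>S - U. c j)" by (rule sum.reindex_bij_betw[OF h])
  finally have "(\<Sum>j\<in>U - S. c j) \<le> (\<Sum>j\<in>S - U. c j)" .
  moreover have "(\<Sum>j\<in>U. c j) = (\<Sum>j\<in>U \<inter> S. c j) + (\<Sum>j\<in>U - S. c j)" by (rule sum.Int_Diff[OF fU])
  moreover have "(\<Sum>j\<in>S. c j) = (\<Sum>j\<in>S \<inter> U. c j) + (\<Sum>j\<in>S - U. c j)" by (rule sum.Int_Diff[OF fS])
  ultimately have "(\<Sum>j\<in>U. c j) \<le> (\<Sum>j\<in>S. c j)" by (simp add: Int_commute)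
  then show ?thesis unfolding dot_top_indicator S_def U_def .
qed

lemma dot_le_leader_top:
  "\<tau> \<in> rankings m \<Longrightarrow> dot m (top_indicator k \<tau>) c \<le> dot m (leader_top m k c) c"
  unfolding leader_top_def
  by (rule dot_top_indicator_le_min_cost[OF min_cost_ranking_in min_cost_ranking_le])

lemma dot_top_indicator_bounds:
  assumes "\<sigma> \<in> rankings m" "\<And>j. j \<in> {1..m} \<Longrightarrow> 0 \<le> u j \<and> u j \<le> B" "0 \<le> B"
  shows "0 \<le> dot m (top_indicator k \<sigma>) u" "dot m (top_indicator k \<sigma>) u \<le> real k * B"
proof -
  show "0 \<le> dot m (top_indicator k \<sigma>) u" unfolding dot_top_indicator using assms(2)
    by (auto intro: sum_nonneg)
  have "card {y\<in>{1..m}. y \<le> k} \<le> card {1..k}" by (rule card_mono) auto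
  then have card_le: "card {j\<in>{1..m}. \<sigma> j \<le> k} \<le> k" using card_top_ranked[OF assms(1), of k] by simp
  have "dot m (top_indicator k \<sigma>) u \<le> (\<Sum>j\<in>{j\<in>{1..m}. \<sigma> j \<le> k}. B)" unfolding dot_top_indicator
    by (rule sum_mono) (use assms(2) in auto)
  also have "\<dots> = real (card {j\<in>{1..m}. \<sigma> j \<le> k}) * B" by simp
  also have "\<dots> \<le> real k * B" by (rule mult_right_mono) (use card_le assms(3) in auto)
  finally show "dot m (top_indicator k \<sigma>) u \<le> real k * B" .
qed

lemma dot_leader_top_bounds:
  assumes "\<And>j. j \<in> {1..m} \<Longrightarrow> 0 \<le> u j \<and> u j \<le> 1"
  shows "0 \<le> dot m (leader_top m k c) u" "dot m (leader_top m k c) u \<le> real k"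
  using dot_top_indicator_bounds[OF min_cost_ranking_in, where u=u and B=1 and k=k] assms
  unfolding leader_top_def by auto

lemma be_the_leader:
  assumes step: "\<And>n j. x (Suc n) j = x n j + y (Suc n) j"
  shows "dot m (leader_top m k (x n)) (x n) - dot m (leader_top m k (x 0)) (x 0)
           \<le> (\<Sum>i\<in>{1..n}. dot m (leader_top m k (x i)) (y i))"
proof (induction n)
  case (Suc n)
  have "dot m (leader_top m k (x (Suc n))) (x (Suc n))
        = dot m (leader_top m k (x (Suc n))) (x n) + dot m (leader_top m k (x (Suc n))) (y (Suc n))"
    unfolding dot_add[symmetric] using step by metis
  also have "dot m (leader_top m k (x (Suc n))) (x n) \<le> dot m (leader_top m k (x n)) (x n)"
    unfolding leader_top_def[of m k "x (Suc n)"] by (rule dot_le_leader_top[OF min_cost_ranking_in])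
  finally show ?case using Suc.IH by simp
qed simp

lemma sum_PiE_mult_component:
  fixes F :: "('a \<Rightarrow> 'b) \<Rightarrow> real" and g :: "'b \<Rightarrow> real"
  assumes i: "i \<in> A"
    and inv: "\<And>x y. x \<in> Pi\<^sub>E A P \<Longrightarrow> y \<in> P i \<Longrightarrow> F (x(i := y)) = F x"
  shows "(\<Sum>x\<in>Pi\<^sub>E A P. F x * g (x i)) * real (card (P i))
          = (\<Sum>x\<in>Pi\<^sub>E A P. F x) * (\<Sum>y\<in>P i. g y)"
proof -
  define S where "S = Pi\<^sub>E A P"
  define \<phi> where "\<phi> = (\<lambda>(x::'a\<Rightarrow>'b, y::'b). (x(i := y), x i))"
  have \<phi>: "\<phi> z \<in> S \<times> P i" "\<phi> (\<phi> z) = z" if "z \<in> S \<times> P i" for z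
    using that i unfolding \<phi>_def S_def by (auto simp: PiE_iff extensional_def split: prod.splits)
  have "(\<Sum>x\<in>S. F x * g (x i)) * real (card (P i)) = (\<Sum>x\<in>S. \<Sum>y\<in>P i. F x * g (x i))"
    by (simp add: sum_distrib_left sum_distrib_right mult_ac)
  also have "\<dots> = (\<Sum>z\<in>S \<times> P i. F (fst z) * g (fst z i))"
    by (subst sum.cartesian_product) (simp only: split_def)
  also have "\<dots> = (\<Sum>z\<in>S \<times> P i. F (fst z) * g (snd z))"
    by (rule sum.reindex_bij_witness[where i=\<phi> and j=\<phi>])
       (use \<phi> inv in \<open>auto simp: \<phi>_def S_def case_prod_beta\<close>)
  also have "\<dots> = (\<Sum>x\<in>S. \<Sum>y\<in>P i. F x * g y)"
    by (subst sum.cartesian_product) (simp only: split_def)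
  also have "\<dots> = (\<Sum>x\<in>S. F x) * (\<Sum>y\<in>P i. g y)"
    by (rule sum_product[symmetric])
  finally show ?thesis unfolding S_def .
qed

definition injections :: "'a set \<Rightarrow> 'b set \<Rightarrow> ('a \<Rightarrow> 'b) set" where
  "injections A B = {f \<in> A \<rightarrow>\<^sub>E B. inj_on f A}"

definition retarget :: "'a set \<Rightarrow> 'a \<Rightarrow> 'b \<Rightarrow> ('a \<Rightarrow> 'b) \<Rightarrow> ('a \<Rightarrow> 'b)" where
  "retarget A j t f = restrict (Transposition.transpose (f j) t \<circ> f) A"

lemma retarget_apply: "j \<in> A \<Longrightarrow> retarget A j t f j = t"
  unfolding retarget_def by simp

lemma retarget_in_injections:
  assumes "f \<in> injections A B" "j \<in> A" "t \<in> B"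
  shows "retarget A j t f \<in> injections A B"
proof -
  have f: "f \<in> A \<rightarrow>\<^sub>E B" "inj_on f A" using assms(1) unfolding injections_def by auto
  have "Transposition.transpose (f j) t permutes B"
    using f(1) assms(2,3) by (intro permutes_swap_id) auto
  then have "retarget A j t f \<in> A \<rightarrow>\<^sub>E B"
    using f(1) unfolding retarget_def by (auto simp: permutes_in_image PiE_iff)
  moreover have "inj_on (retarget A j t f) A"
    unfolding retarget_def using comp_inj_on[OF f(2) inj_on_transpose] inj_on_cong
    by (metis restrict_apply')
  ultimately show ?thesis unfolding injections_def by simp
qed

lemma retarget_retarget:
  assumes "f \<in> injections A B" "j \<in> A"
  shows "retarget A j (f j) (retarget A j t f) = f"
proof
  fix x
  have "f x = undefined" if "x \<notin> A" using assms(1) that unfolding injections_def by auto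
  then show "retarget A j (f j) (retarget A j t f) x = f x"
    using assms(2) unfolding retarget_def by (auto simp: transpose_commute[of t])
qed

text \<open>Under a uniformly random injection, every point is equally likely to be the image of j:
  retargeting j from f j to t is an involution of the pairs (f, t).\<close>
lemma sum_injections_component:
  fixes g :: "'b \<Rightarrow> real"
  assumes j: "j \<in> A"
  shows "real (card B) * (\<Sum>f\<in>injections A B. g (f j)) = real (card (injections A B)) * (\<Sum>t\<in>B. g t)"
proof -
  define Pr where "Pr = injections A B"
  define \<psi> where "\<psi> = (\<lambda>(f :: 'a \<Rightarrow> 'b, t). (retarget A j t f, f j))"
  have \<psi>: "\<psi> z \<in> Pr \<times> B" "\<psi> (\<psi> z) = z" if "z \<in> Pr \<times> B" for z
    using that j retarget_in_injections[of _ A B j] retarget_retarget[of _ A B j]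
    unfolding \<psi>_def Pr_def by (auto simp: retarget_apply injections_def PiE_iff)
  have "real (card B) * (\<Sum>f\<in>Pr. g (f j)) = (\<Sum>f\<in>Pr. \<Sum>t\<in>B. g (f j))"
    by (simp add: sum_distrib_left)
  also have "\<dots> = (\<Sum>z\<in>Pr \<times> B. g (fst z j))"
    by (subst sum.cartesian_product) (simp only: split_def)
  also have "\<dots> = (\<Sum>z\<in>Pr \<times> B. g (snd z))"
    by (rule sum.reindex_bij_witness[where i=\<psi> and j=\<psi>])
       (use \<psi> j in \<open>auto simp: \<psi>_def retarget_apply case_prod_beta\<close>)
  also have "\<dots> = (\<Sum>f\<in>Pr. \<Sum>t\<in>B. g t)"
    by (subst sum.cartesian_product) (simp only: split_def)
  also have "\<dots> = real (card Pr) * (\<Sum>t\<in>B. g t)" by simp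
  finally show ?thesis unfolding Pr_def .
qed

lemma probe_choices_eq: "probe_choices m T K i = injections {1..m} (block T K i)"
  unfolding probe_choices_def injections_def ..

lemma card_block: "i \<ge> 1 \<Longrightarrow> card (block T K i) = T div K"
  unfolding block_def by (cases i) auto

lemma block_of_eq:
  assumes "t \<in> block T K i" "i \<ge> 1" "T div K \<ge> 1"
  shows "block_of T K t = i"
proof -
  define L where "L = T div K"
  have t: "(i - 1) * L + 1 \<le> t" "t \<le> i * L" using assms(1) unfolding block_def L_def by auto
  have "(t - 1) div L = i - 1"
  proof (rule div_nat_eqI)
    show "L * (i - 1) \<le> t - 1" using t by (simp add: mult.commute)
    have "t - 1 < i * L" using t assms(3) unfolding L_def by linarith
    then show "t - 1 < L * Suc (i - 1)" using assms(2) by (simp add: mult.commute)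
  qed
  then show ?thesis unfolding block_of_def L_def using assms(2) by simp
qed

lemma mem_block_block_of:
  assumes "1 \<le> t" "T div K \<ge> 1"
  shows "t \<in> block T K (block_of T K t)"
proof -
  define L where "L = T div K"
  define q where "q = (t - 1) div L"
  have lo: "q * L \<le> t - 1" unfolding q_def by (simp add: div_times_less_eq_dividend)
  have hi: "t - 1 < (q + 1) * L"
  proof -
    have "q * L + (t - 1) mod L = t - 1" unfolding q_def by (rule div_mult_mod_eq)
    moreover have "(t - 1) mod L < L" using assms(2) unfolding L_def by simp
    ultimately show ?thesis by simp
  qed
  have "block_of T K t = q + 1" unfolding block_of_def q_def L_def ..
  then show ?thesis using lo hi assms(1) unfolding block_def L_def[symmetric] by auto
qed

lemma Union_blocks:
  assumes "K dvd T" "T div K \<ge> 1"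
  shows "{1..T} = (\<Union>i\<in>{1..K}. block T K i)"
proof (intro subset_antisym subsetI)
  fix t assume t: "t \<in> {1..T}"
  have "t - 1 < T" using t by auto
  then have "t - 1 < K * (T div K)" using assms(1) by simp
  then have "(t - 1) div (T div K) < K"
    by (intro less_mult_imp_div_less) (simp add: mult.commute)
  then have "block_of T K t \<in> {1..K}" unfolding block_of_def by simp
  with mem_block_block_of[of t T K] t assms(2) show "t \<in> (\<Union>i\<in>{1..K}. block T K i)" by auto
next
  fix t assume "t \<in> (\<Union>i\<in>{1..K}. block T K i)"
  then obtain i where i: "i \<in> {1..K}" "t \<in> block T K i" by auto
  have "i * (T div K) \<le> K * (T div K)" using i(1) by simp
  then show "t \<in> {1..T}" using i(2) assms(1) unfolding block_def by auto
qed

lemma disjoint_blocks: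
  assumes "T div K \<ge> 1" "i \<ge> 1" "i' \<ge> 1" "i \<noteq> i'"
  shows "block T K i \<inter> block T K i' = {}"
  using block_of_eq[of _ T K i] block_of_eq[of _ T K i'] assms by auto

lemma probe_choices_nonempty:
  assumes "i \<ge> 1" "m \<le> T div K"
  shows "probe_choices m T K i \<noteq> {}"
proof -
  define f where "f = restrict (\<lambda>j. (i - 1) * (T div K) + j) {1..m}"
  have "(i - 1) * (T div K) + T div K = i * (T div K)" using assms(1) by (cases i) auto
  then have "f \<in> {1..m} \<rightarrow>\<^sub>E block T K i" using assms(2) unfolding f_def block_def by auto
  moreover have "inj_on f {1..m}" unfolding f_def by (auto simp: inj_on_def)
  ultimately show ?thesis unfolding probe_choices_def by blast
qed

lemma finite_probe_choices: "finite (probe_choices m T K i)"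
  unfolding probe_choices_def
  by (rule finite_subset[of _ "{1..m} \<rightarrow>\<^sub>E block T K i"]) (auto intro: finite_PiE simp: block_def)

definition min_cost_set :: "nat \<Rightarrow> (nat \<Rightarrow> real) \<Rightarrow> (nat \<Rightarrow> nat) set" where
  "min_cost_set m c = {\<sigma>\<in>rankings m. \<forall>\<tau>\<in>rankings m. rank_cost m c \<sigma> \<le> rank_cost m c \<tau>}"

lemma min_cost_ranking_eq_Eps: "min_cost_ranking m c = (SOME \<sigma>. \<sigma> \<in> min_cost_set m c)"
proof -
  have "(\<lambda>x. is_arg_min (rank_cost m c) (\<lambda>x. x \<in> rankings m) x) = (\<lambda>x. x \<in> min_cost_set m c)"
    by (rule ext) (auto simp: is_arg_min_def min_cost_set_def not_less)
  then show ?thesis unfolding min_cost_ranking_def arg_min_on_def arg_min_def by simp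
qed

lemma measurable_min_cost_set:
  assumes c: "\<And>j. c j \<in> borel_measurable N"
  shows "(\<lambda>\<omega>. min_cost_set m (\<lambda>j. c j \<omega>)) \<in> N \<rightarrow>\<^sub>M count_space (Pow (rankings m))"
proof (subst measurable_count_space_eq2)
  show "finite (Pow (rankings m))" using finite_rankings by simp
  show "(\<lambda>\<omega>. min_cost_set m (\<lambda>j. c j \<omega>)) \<in> space N \<rightarrow> Pow (rankings m) \<and>
    (\<forall>a\<in>Pow (rankings m). (\<lambda>\<omega>. min_cost_set m (\<lambda>j. c j \<omega>)) -` {a} \<inter> space N \<in> sets N)"
  proof safe
    fix \<omega> \<sigma> assume "\<sigma> \<in> min_cost_set m (\<lambda>j. c j \<omega>)"
    then show "\<sigma> \<in> rankings m" unfolding min_cost_set_def by simp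
  next
    fix a assume a: "a \<subseteq> rankings m"
    have eq: "(\<lambda>\<omega>. min_cost_set m (\<lambda>j. c j \<omega>)) -` {a} \<inter> space N
      = {\<omega>\<in>space N. \<forall>\<sigma>\<in>rankings m. (\<sigma> \<in> a) = (\<forall>\<tau>\<in>rankings m.
           (\<Sum>j\<in>{1..m}. real (\<sigma> j) * c j \<omega>) \<le> (\<Sum>j\<in>{1..m}. real (\<tau> j) * c j \<omega>))}"
      using a unfolding min_cost_set_def rank_cost_def by auto
    have [measurable]: "\<And>j. c j \<in> borel_measurable N" by (rule c)
    have fp: "finite (rankings m)" by (rule finite_rankings)
    show "(\<lambda>\<omega>. min_cost_set m (\<lambda>j. c j \<omega>)) -` {a} \<inter> space N \<in> sets N"
      unfolding eq using fp by measurable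
  qed
qed

lemma measurable_min_cost_ranking:
  fixes F :: "(nat \<Rightarrow> nat) \<Rightarrow> real"
  assumes c: "\<And>j. c j \<in> borel_measurable N"
  shows "(\<lambda>\<omega>. F (min_cost_ranking m (\<lambda>j. c j \<omega>))) \<in> borel_measurable N"
proof -
  have "(\<lambda>\<omega>. (\<lambda>S. F (SOME \<sigma>. \<sigma> \<in> S)) (min_cost_set m (\<lambda>j. c j \<omega>))) \<in> borel_measurable N"
    by (rule measurable_compose[OF measurable_min_cost_set[OF c]]) simp
  then show ?thesis by (simp add: min_cost_ranking_eq_Eps)
qed

definition unif_interval :: "real \<Rightarrow> real measure" where
  "unif_interval a = uniform_measure lborel {0..a}"

definition noise :: "nat \<Rightarrow> real \<Rightarrow> (nat \<Rightarrow> real) measure" where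
  "noise m a = PiM {1..m} (\<lambda>_. unif_interval a)"

definition noise_seq :: "nat \<Rightarrow> nat \<Rightarrow> real \<Rightarrow> (nat \<Rightarrow> nat \<Rightarrow> real) measure" where
  "noise_seq m T a = PiM {1..T} (\<lambda>_. noise m a)"

definition probe_measure :: "nat \<Rightarrow> nat \<Rightarrow> nat \<Rightarrow> (nat \<Rightarrow> nat \<Rightarrow> nat) measure" where
  "probe_measure m T K = PiM {1..K} (\<lambda>i. measure_pmf (pmf_of_set (probe_choices m T K i)))"

definition probe_profiles :: "nat \<Rightarrow> nat \<Rightarrow> nat \<Rightarrow> (nat \<Rightarrow> nat \<Rightarrow> nat) set" where
  "probe_profiles m T K = Pi\<^sub>E {1..K} (probe_choices m T K)"

lemma rtop1f_space_eq: "rtop1f_space m T K \<epsilon> = probe_measure m T K \<Otimes>\<^sub>M noise_seq m T (1/\<epsilon>)"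
  unfolding rtop1f_space_def probe_measure_def noise_seq_def noise_def unif_interval_def ..

lemma prob_space_unif_interval: "a > 0 \<Longrightarrow> prob_space (unif_interval a)"
  unfolding unif_interval_def by (intro prob_space_uniform_measure) auto

lemma prob_space_noise: "a > 0 \<Longrightarrow> prob_space (noise m a)"
  unfolding noise_def by (intro prob_space_PiM prob_space_unif_interval)

lemma prob_space_noise_seq: "a > 0 \<Longrightarrow> prob_space (noise_seq m T a)"
  unfolding noise_seq_def by (intro prob_space_PiM prob_space_noise)

lemma prob_space_probe_measure: "prob_space (probe_measure m T K)"
  unfolding probe_measure_def by (intro prob_space_PiM measure_pmf.prob_space_axioms)

lemma AE_noise_bounds:
  assumes a: "a > 0"
  shows "AE p in noise m a. \<forall>j\<in>{1..m}. 0 \<le> p j \<and> p j \<le> a"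
proof -
  have "AE p in noise m a. 0 \<le> p j \<and> p j \<le> a" if j: "j \<in> {1..m}" for j
  proof -
    have "AE x in unif_interval a. 0 \<le> x \<and> x \<le> a"
      unfolding unif_interval_def by (rule AE_uniform_measureI) auto
    then show ?thesis unfolding noise_def
      by (rule AE_PiM_component[OF prob_space_unif_interval[OF a] j])
  qed
  then show ?thesis by (subst AE_finite_all) auto
qed

lemma integral_noise_seq_component:
  fixes \<psi> :: "(nat \<Rightarrow> real) \<Rightarrow> real"
  assumes a: "a > 0" and t: "t \<in> {1..T}" and psi: "\<psi> \<in> borel_measurable (noise m a)"
  shows "(\<integral>P. \<psi> (P t) \<partial>noise_seq m T a) = (\<integral>p. \<psi> p \<partial>noise m a)"
proof -
  have d: "distr (noise_seq m T a) (noise m a) (\<lambda>P. P t) = noise m a"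
    unfolding noise_seq_def by (rule distr_PiM_component[OF prob_space_noise[OF a] t])
  have "(\<integral>p. \<psi> p \<partial>noise m a) = (\<integral>p. \<psi> p \<partial>distr (noise_seq m T a) (noise m a) (\<lambda>P. P t))"
    by (simp add: d)
  also have "\<dots> = (\<integral>P. \<psi> (P t) \<partial>noise_seq m T a)"
    by (rule integral_distr[where g="\<lambda>P. P t"]) (use t psi in \<open>auto simp: noise_seq_def\<close>)
  finally show ?thesis by simp
qed

lemma measurable_noise_seq_component:
  assumes t: "t \<in> {1..T}" and psi: "\<psi> \<in> borel_measurable (noise m a)"
  shows "(\<lambda>P. \<psi> (P t)) \<in> borel_measurable (noise_seq m T a)"
  by (rule measurable_compose[OF _ psi]) (use t in \<open>simp add: noise_seq_def\<close>)

lemma AE_probe_profiles: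
  assumes "\<And>i. i \<in> {1..K} \<Longrightarrow> probe_choices m T K i \<noteq> {}"
  shows "AE x in probe_measure m T K. x \<in> probe_profiles m T K"
proof -
  have "AE x in probe_measure m T K. x i \<in> probe_choices m T K i" if i: "i \<in> {1..K}" for i
  proof -
    have "AE y in measure_pmf (pmf_of_set (probe_choices m T K i)). y \<in> probe_choices m T K i"
      using assms[OF i] finite_probe_choices by (simp add: AE_measure_pmf_iff)
    then show ?thesis unfolding probe_measure_def
      by (rule AE_PiM_component[OF measure_pmf.prob_space_axioms i])
  qed
  then have "AE x in probe_measure m T K. \<forall>i\<in>{1..K}. x i \<in> probe_choices m T K i"
    by (subst AE_finite_all) auto
  moreover have "AE x in probe_measure m T K. x \<in> space (probe_measure m T K)" by simp
  ultimately show ?thesis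
    by eventually_elim (auto simp: probe_profiles_def probe_measure_def space_PiM PiE_iff)
qed

lemma measure_probe_singleton:
  assumes ne: "\<And>i. i \<in> {1..K} \<Longrightarrow> probe_choices m T K i \<noteq> {}" and x: "x \<in> probe_profiles m T K"
  shows "measure (probe_measure m T K) {x} = 1 / real (card (probe_profiles m T K))"
proof -
  interpret product_prob_space "\<lambda>i. measure_pmf (pmf_of_set (probe_choices m T K i))"
    by (intro product_prob_spaceI measure_pmf.prob_space_axioms)
  have xs: "{x} = Pi\<^sub>E {1..K} (\<lambda>i. {x i})" using x unfolding probe_profiles_def
    by (intro PiE_singleton[symmetric]) (simp add: PiE_iff)
  have "emeasure (probe_measure m T K) {x}
      = (\<Prod>i\<in>{1..K}. emeasure (measure_pmf (pmf_of_set (probe_choices m T K i))) {x i})"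
    unfolding probe_measure_def xs by (rule emeasure_PiM) auto
  also have "\<dots> = (\<Prod>i\<in>{1..K}. ennreal (1 / real (card (probe_choices m T K i))))"
  proof (rule prod.cong[OF refl])
    fix i assume i: "i \<in> {1..K}"
    have xi: "x i \<in> probe_choices m T K i" using x i unfolding probe_profiles_def by auto
    show "emeasure (measure_pmf (pmf_of_set (probe_choices m T K i))) {x i}
        = ennreal (1 / real (card (probe_choices m T K i)))"
      using ne[OF i] finite_probe_choices xi by (simp add: emeasure_pmf_single)
  qed
  also have "\<dots> = ennreal (\<Prod>i\<in>{1..K}. 1 / real (card (probe_choices m T K i)))"
    by (rule prod_ennreal) auto
  also have "(\<Prod>i\<in>{1..K}. 1 / real (card (probe_choices m T K i)))
      = 1 / real (card (probe_profiles m T K))"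
    unfolding probe_profiles_def by (simp add: card_PiE prod_dividef)
  finally have "emeasure (probe_measure m T K) {x}
      = ennreal (1 / real (card (probe_profiles m T K)))" .
  then show ?thesis by (simp add: measure_def)
qed

lemma finite_probe_profiles: "finite (probe_profiles m T K)"
  unfolding probe_profiles_def by (intro finite_PiE finite_probe_choices) auto

lemma probe_profiles_nonempty:
  assumes "\<And>i. i \<in> {1..K} \<Longrightarrow> probe_choices m T K i \<noteq> {}"
  shows "probe_profiles m T K \<noteq> {}"
  unfolding probe_profiles_def using assms by (simp add: PiE_eq_empty_iff)

lemma integral_finite_support:
  fixes g :: "'a \<Rightarrow> real"
  assumes M: "prob_space M" and S: "finite S" and single: "\<And>x. x \<in> S \<Longrightarrow> {x} \<in> sets M"
    and AE: "AE x in M. x \<in> S" and g: "g \<in> borel_measurable M"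
  shows "integral\<^sup>L M g = (\<Sum>x\<in>S. g x * measure M {x})"
proof -
  interpret prob_space M by (rule M)
  have mi: "(\<lambda>y. g x * indicator {x} y) \<in> borel_measurable M" if "x \<in> S" for x
    using single[OF that] by measurable
  have ii: "integrable M (\<lambda>y. g x * indicator {x} y)" if "x \<in> S" for x
  proof -
    have "emeasure M {x} < \<top>" by (simp add: emeasure_eq_measure)
    then show ?thesis using single[OF that]
      by (intro integrable_mult_right integrable_real_indicator) auto
  qed
  have "integral\<^sup>L M g = integral\<^sup>L M (\<lambda>y. \<Sum>x\<in>S. g x * indicator {x} y)"
  proof (rule integral_cong_AE)
    show "g \<in> borel_measurable M" by (rule g)
    show "(\<lambda>y. \<Sum>x\<in>S. g x * indicator {x} y) \<in> borel_measurable M"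
      by (rule borel_measurable_sum) (rule mi)
    show "AE y in M. g y = (\<Sum>x\<in>S. g x * indicator {x} y)"
      using AE
    proof eventually_elim
      case (elim y)
      have "(\<Sum>x\<in>S. g x * indicator {x} y) = (\<Sum>x\<in>S. if y = x then g x else 0)"
        by (rule sum.cong) (auto simp: indicator_def)
      also have "\<dots> = g y" using elim S by (simp add: sum.delta)
      finally show ?case by simp
    qed
  qed
  also have "\<dots> = (\<Sum>x\<in>S. integral\<^sup>L M (\<lambda>y. g x * indicator {x} y))"
    by (rule Bochner_Integration.integral_sum) (rule ii)
  also have "\<dots> = (\<Sum>x\<in>S. g x * measure M {x})"
  proof (rule sum.cong[OF refl])
    fix x assume x: "x \<in> S"
    have "{x} \<inter> space M = {x}" using sets.sets_into_space[OF single[OF x]] by auto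
    then show "integral\<^sup>L M (\<lambda>y. g x * indicator {x} y) = g x * measure M {x}" by simp
  qed
  finally show ?thesis .
qed

text \<open>The learner only looks at the probes x i j with i \<le> K and j \<le> m; forgetting the rest maps
  the probe component into a countable set, which makes functions of (x, P) measurable as soon
  as they are measurable in P.\<close>
definition truncate_probes :: "nat \<Rightarrow> nat \<Rightarrow> (nat \<Rightarrow> nat \<Rightarrow> nat) \<Rightarrow> (nat \<Rightarrow> nat \<Rightarrow> nat)" where
  "truncate_probes m K x = restrict (\<lambda>i. restrict (x i) {1..m}) {1..K}"

definition truncated_profiles :: "nat \<Rightarrow> nat \<Rightarrow> (nat \<Rightarrow> nat \<Rightarrow> nat) set" where
  "truncated_profiles m K = Pi\<^sub>E {1..K} (\<lambda>_. Pi\<^sub>E {1..m} (\<lambda>_. UNIV))"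

lemma countable_truncated_profiles: "countable (truncated_profiles m K)"
  unfolding truncated_profiles_def by (intro countable_PiE) auto

lemma truncate_probes_vimage:
  assumes "y \<in> truncated_profiles m K"
  shows "truncate_probes m K -` {y} \<inter> space (probe_measure m T K)
    = Pi\<^sub>E {1..K} (\<lambda>i. {z. restrict z {1..m} = y i})"
proof -
  have sp: "space (probe_measure m T K) = Pi\<^sub>E {1..K} (\<lambda>i. UNIV)"
    unfolding probe_measure_def by (simp add: space_PiM)
  have "truncate_probes m K x = y \<longleftrightarrow> (\<forall>i\<in>{1..K}. restrict (x i) {1..m} = y i)" for x
    using assms unfolding truncate_probes_def truncated_profiles_def
    by (auto simp: fun_eq_iff PiE_iff extensional_def)
  then show ?thesis unfolding sp by (auto simp: PiE_iff)
qed

lemma measurable_truncate_probes: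
  "truncate_probes m K \<in> probe_measure m T K \<rightarrow>\<^sub>M count_space (truncated_profiles m K)"
proof (subst measurable_count_space_eq_countable[OF countable_truncated_profiles], safe)
  fix x show "truncate_probes m K x \<in> truncated_profiles m K"
    unfolding truncate_probes_def truncated_profiles_def by auto
next
  fix y assume "y \<in> truncated_profiles m K"
  then have "truncate_probes m K -` {y} \<inter> space (probe_measure m T K)
      = Pi\<^sub>E {1..K} (\<lambda>i. {z. restrict z {1..m} = y i})" by (rule truncate_probes_vimage)
  also have "\<dots> \<in> sets (probe_measure m T K)"
    unfolding probe_measure_def by (intro sets_PiM_I_finite) auto
  finally show "truncate_probes m K -` {y} \<inter> space (probe_measure m T K)
      \<in> sets (probe_measure m T K)" .
qed

lemma measurable_truncation_invariant:
  fixes \<phi> :: "(nat \<Rightarrow> nat \<Rightarrow> nat) \<times> (nat \<Rightarrow> nat \<Rightarrow> real) \<Rightarrow> real"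
  assumes inv: "\<And>x P. \<phi> (x, P) = \<phi> (truncate_probes m K x, P)"
    and meas: "\<And>x. (\<lambda>P. \<phi> (x, P)) \<in> borel_measurable (noise_seq m T a)"
  shows "\<phi> \<in> borel_measurable (probe_measure m T K \<Otimes>\<^sub>M noise_seq m T a)"
proof -
  have "\<phi> \<in> borel_measurable (count_space (truncated_profiles m K) \<Otimes>\<^sub>M noise_seq m T a)"
    by (rule measurable_pair_measure_countable1[OF countable_truncated_profiles meas])
  moreover have "(\<lambda>\<omega>. (truncate_probes m K (fst \<omega>), snd \<omega>))
      \<in> probe_measure m T K \<Otimes>\<^sub>M noise_seq m T a
          \<rightarrow>\<^sub>M count_space (truncated_profiles m K) \<Otimes>\<^sub>M noise_seq m T a"
    by (intro measurable_Pair measurable_compose[OF measurable_fst measurable_truncate_probes] measurable_snd)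
  ultimately have "(\<lambda>\<omega>. \<phi> (truncate_probes m K (fst \<omega>), snd \<omega>))
      \<in> borel_measurable (probe_measure m T K \<Otimes>\<^sub>M noise_seq m T a)"
    by (rule measurable_compose[rotated])
  moreover have "(\<lambda>\<omega>. \<phi> (truncate_probes m K (fst \<omega>), snd \<omega>)) = \<phi>"
    using inv by (auto simp: fun_eq_iff)
  ultimately show ?thesis by simp
qed

lemma singleton_probe_profile_sets:
  "x \<in> probe_profiles m T K \<Longrightarrow> {x} \<in> sets (probe_measure m T K)"
  using PiE_singleton[of x "{1..K}"] unfolding probe_profiles_def probe_measure_def
  by (metis (no_types, lifting) PiE_iff sets_PiM_I_finite finite_atLeastAtMost sets_measure_pmf UNIV_I)

lemma integral_probe_noise:
  fixes \<phi> :: "(nat \<Rightarrow> nat \<Rightarrow> nat) \<times> (nat \<Rightarrow> nat \<Rightarrow> real) \<Rightarrow> real"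
  assumes a: "a > 0" and ne: "\<And>i. i \<in> {1..K} \<Longrightarrow> probe_choices m T K i \<noteq> {}"
    and inv: "\<And>x P. \<phi> (x, P) = \<phi> (truncate_probes m K x, P)"
    and meas: "\<And>x. (\<lambda>P. \<phi> (x, P)) \<in> borel_measurable (noise_seq m T a)"
    and bnd: "\<And>z. \<bar>\<phi> z\<bar> \<le> B"
  shows "integrable (probe_measure m T K \<Otimes>\<^sub>M noise_seq m T a) \<phi>"
    and "integral\<^sup>L (probe_measure m T K \<Otimes>\<^sub>M noise_seq m T a) \<phi>
          = (\<Sum>x\<in>probe_profiles m T K. \<integral>P. \<phi> (x, P) \<partial>noise_seq m T a) / real (card (probe_profiles m T K))"
proof -
  interpret P: pair_prob_space "probe_measure m T K" "noise_seq m T a"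
    unfolding pair_prob_space_def pair_sigma_finite_def
    using prob_space_probe_measure prob_space_noise_seq[OF a]
      by (simp add: prob_space_imp_sigma_finite)
  have mphi: "\<phi> \<in> borel_measurable (probe_measure m T K \<Otimes>\<^sub>M noise_seq m T a)"
    by (rule measurable_truncation_invariant[OF inv meas])
  show int: "integrable (probe_measure m T K \<Otimes>\<^sub>M noise_seq m T a) \<phi>"
    by (rule P.integrable_const_bound[where B=B]) (use bnd mphi in auto)
  have "integral\<^sup>L (probe_measure m T K \<Otimes>\<^sub>M noise_seq m T a) \<phi>
      = (\<integral>x. (\<integral>P. \<phi> (x, P) \<partial>noise_seq m T a) \<partial>probe_measure m T K)"
    by (rule P.integral_fst'[OF int, symmetric])
  also have "\<dots> = (\<Sum>x\<in>probe_profiles m T K.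
      (\<integral>P. \<phi> (x, P) \<partial>noise_seq m T a) * measure (probe_measure m T K) {x})"
    using mphi AE_probe_profiles[OF ne]
    by (intro integral_finite_support prob_space_probe_measure finite_probe_profiles
        singleton_probe_profile_sets P.M2.borel_measurable_lebesgue_integral) simp_all
  also have "\<dots> = (\<Sum>x\<in>probe_profiles m T K. \<integral>P. \<phi> (x, P) \<partial>noise_seq m T a) / real (card (probe_profiles m T K))"
    unfolding sum_divide_distrib using measure_probe_singleton[OF ne] by (intro sum.cong refl) auto
  finally show "integral\<^sup>L (probe_measure m T K \<Otimes>\<^sub>M noise_seq m T a) \<phi>
      = (\<Sum>x\<in>probe_profiles m T K. \<integral>P. \<phi> (x, P) \<partial>noise_seq m T a) / real (card (probe_profiles m T K))" .
qed

lemma sets_unif_interval[measurable_cong]: "sets (unif_interval a) = sets borel"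
  unfolding unif_interval_def by simp

lemma space_unif_interval: "space (unif_interval a) = UNIV"
  unfolding unif_interval_def by simp

lemma nn_integral_lborel_shift_le:
  fixes G :: "real \<Rightarrow> ennreal"
  assumes G[measurable]: "G \<in> borel_measurable borel" and bnd: "\<And>y. G y \<le> ennreal B" and B: "B \<ge> 0"
  shows "(\<integral>\<^sup>+y. G (y + 1) * indicator {0..a} y \<partial>lborel)
      \<le> (\<integral>\<^sup>+y. G y * indicator {0..a} y \<partial>lborel) + ennreal B"
proof -
  have "(\<integral>\<^sup>+y. G (y + 1) * indicator {0..a} y \<partial>lborel) = (\<integral>\<^sup>+z. G z * indicator {1..a+1} z \<partial>lborel)"
    using nn_integral_real_affine[of "\<lambda>z. G z * indicator {1..a+1} z" 1 1]
    by (simp add: indicator_def add.commute)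
  also have "\<dots> \<le> (\<integral>\<^sup>+z. G z * indicator {0..a} z + ennreal B * indicator {a..a+1} z \<partial>lborel)"
    using bnd by (intro nn_integral_mono) (auto simp: indicator_def)
  also have "\<dots> = (\<integral>\<^sup>+z. G z * indicator {0..a} z \<partial>lborel) + ennreal B"
    using B by (subst nn_integral_add) (auto simp: nn_integral_cmult_indicator)
  finally show ?thesis .
qed

lemma nn_integral_unif_shift_le:
  fixes G :: "real \<Rightarrow> ennreal"
  assumes a: "a > 0" and G[measurable]: "G \<in> borel_measurable borel"
    and bnd: "\<And>y. G y \<le> ennreal B" and B: "B \<ge> 0"
  shows "(\<integral>\<^sup>+y. G (y + 1) \<partial>unif_interval a) \<le> (\<integral>\<^sup>+y. G y \<partial>unif_interval a) + ennreal (B / a)"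
proof -
  have unif: "(\<integral>\<^sup>+y. H y \<partial>unif_interval a) = (\<integral>\<^sup>+y. H y * indicator {0..a} y \<partial>lborel) / ennreal a"
    if [measurable]: "H \<in> borel_measurable borel" for H :: "real \<Rightarrow> ennreal"
    unfolding unif_interval_def using a by (subst nn_integral_uniform_measure) auto
  have "(\<integral>\<^sup>+y. G (y + 1) \<partial>unif_interval a)
      = (\<integral>\<^sup>+y. G (y + 1) * indicator {0..a} y \<partial>lborel) / ennreal a"
    by (rule unif) measurable
  also have "\<dots> \<le> ((\<integral>\<^sup>+y. G y * indicator {0..a} y \<partial>lborel) + ennreal B) / ennreal a"
    by (intro divide_right_mono_ennreal nn_integral_lborel_shift_le G bnd B)
  also have "\<dots> = (\<integral>\<^sup>+y. G y \<partial>unif_interval a) + ennreal (B / a)"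
    unfolding unif[OF G] using a B by (simp add: add_divide_distrib_ennreal divide_ennreal)
  finally show ?thesis .
qed

definition shift_on :: "nat set \<Rightarrow> (nat \<Rightarrow> real) \<Rightarrow> (nat \<Rightarrow> real)" where
  "shift_on J p = (\<lambda>i. if i \<in> J then p i + 1 else p i)"

lemma shift_on_singleton: "shift_on {j} p = p(j := p j + 1)"
  unfolding shift_on_def by auto

lemma measurable_shift_on:
  assumes J: "J \<subseteq> {1..m}"
  shows "shift_on J \<in> noise m a \<rightarrow>\<^sub>M noise m a"
proof -
  have "(\<lambda>p i. (\<lambda>i p. if i \<in> J then p i + 1 else p i) i p) \<in> noise m a \<rightarrow>\<^sub>M noise m a"
    unfolding noise_def
  proof (rule measurable_PiM_single')
    fix i assume i: "i \<in> {1..m}"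
    show "(\<lambda>p. if i \<in> J then p i + 1 else p i) \<in> Pi\<^sub>M {1..m} (\<lambda>_. unif_interval a)
        \<rightarrow>\<^sub>M unif_interval a"
      using i by (cases "i \<in> J") (simp_all add: measurable_cong_sets[OF refl sets_unif_interval])
  next
    show "(\<lambda>p i. if i \<in> J then p i + 1 else p i)
        \<in> space (Pi\<^sub>M {1..m} (\<lambda>_. unif_interval a)) \<rightarrow> (\<Pi>\<^sub>E i\<in>{1..m}. space (unif_interval a))"
      using J by (auto simp: space_PiM PiE_iff space_unif_interval extensional_def)
  qed
  then show ?thesis unfolding shift_on_def by simp
qed

lemma nn_integral_noise_incr_le:
  fixes g :: "(nat \<Rightarrow> real) \<Rightarrow> ennreal"
  assumes a: "a > 0" and j: "j \<in> {1..m}" and g: "g \<in> borel_measurable (noise m a)"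
    and bnd: "\<And>p. g p \<le> ennreal B" and B: "B \<ge> 0"
  shows "(\<integral>\<^sup>+p. g (p(j := p j + 1)) \<partial>noise m a) \<le> (\<integral>\<^sup>+p. g p \<partial>noise m a) + ennreal (B / a)"
proof -
  define U where "U = unif_interval a"
  define I where "I = {1..m} - {j}"
  define Q where "Q = Pi\<^sub>M I (\<lambda>_. U)"
  have U: "prob_space U" unfolding U_def by (rule prob_space_unif_interval[OF a])
  interpret product_prob_space "\<lambda>_::nat. U" by (intro product_prob_spaceI U)
  interpret Q: prob_space Q unfolding Q_def by (intro prob_space_PiM U)
  have I: "finite I" "j \<notin> I" unfolding I_def by auto
  have noise: "noise m a = Pi\<^sub>M (insert j I) (\<lambda>_. U)"
    using j unfolding noise_def U_def I_def by (simp add: insert_absorb)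
  have g': "g \<in> borel_measurable (Pi\<^sub>M (insert j I) (\<lambda>_. U))" using g noise by simp
  have gj: "(\<lambda>p. g (p(j := p j + 1))) \<in> borel_measurable (Pi\<^sub>M (insert j I) (\<lambda>_. U))"
    using measurable_compose[OF measurable_shift_on[of "{j}"] g] j noise
      by (simp add: shift_on_singleton)
  have sections: "(\<lambda>y. g (x(j := y))) \<in> borel_measurable borel" if "x \<in> space Q" for x
    using measurable_compose[OF measurable_component_update[OF that[unfolded Q_def] I(2)] g']
    unfolding U_def by (simp add: measurable_cong_sets[OF sets_unif_interval refl])
  have "(\<lambda>x. \<integral>\<^sup>+y. g (x(j := y)) \<partial>U) \<in> borel_measurable Q"
    using measurable_compose[OF measurable_add_dim g'] unfolding Q_def
    by (intro sigma_finite_measure.borel_measurable_nn_integral prob_space_imp_sigma_finite U)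
       (simp add: case_prod_beta)
  then have "(\<integral>\<^sup>+x. (\<integral>\<^sup>+y. g (x(j := y)) \<partial>U) + ennreal (B / a) \<partial>Q)
      = (\<integral>\<^sup>+x. (\<integral>\<^sup>+y. g (x(j := y)) \<partial>U) \<partial>Q) + ennreal (B / a)"
    by (simp add: nn_integral_add Q.emeasure_space_1)
  moreover have "(\<integral>\<^sup>+x. (\<integral>\<^sup>+y. g (x(j := y + 1)) \<partial>U) \<partial>Q)
      \<le> (\<integral>\<^sup>+x. (\<integral>\<^sup>+y. g (x(j := y)) \<partial>U) + ennreal (B / a) \<partial>Q)"
    using nn_integral_unif_shift_le[OF a sections bnd B] unfolding U_def
      by (intro nn_integral_mono) simp
  ultimately show ?thesis
    unfolding noise product_nn_integral_insert[OF I gj] product_nn_integral_insert[OF I g'] Q_def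
    by simp
qed

lemma shift_on_insert: "j \<notin> J \<Longrightarrow> shift_on (insert j J) p = shift_on J (p(j := p j + 1))"
  unfolding shift_on_def by (auto simp: fun_eq_iff)

lemma nn_integral_noise_shift_le:
  fixes g :: "(nat \<Rightarrow> real) \<Rightarrow> ennreal"
  assumes a: "a > 0" and J: "J \<subseteq> {1..m}" and g: "g \<in> borel_measurable (noise m a)"
    and bnd: "\<And>p. g p \<le> ennreal B" and B: "B \<ge> 0"
  shows "(\<integral>\<^sup>+p. g (shift_on J p) \<partial>noise m a)
      \<le> (\<integral>\<^sup>+p. g p \<partial>noise m a) + ennreal (real (card J) * B / a)"
proof -
  have "finite J" using J by (rule finite_subset) simp
  then show ?thesis using J
  proof (induction J rule: finite_induct)
    case empty
    then show ?case by (simp add: shift_on_def)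
  next
    case (insert j J)
    have j: "j \<in> {1..m}" and J: "J \<subseteq> {1..m}" using insert.prems by auto
    have gJ: "(\<lambda>p. g (shift_on J p)) \<in> borel_measurable (noise m a)"
      by (rule measurable_compose[OF measurable_shift_on[OF J] g])
    have "(\<integral>\<^sup>+p. g (shift_on (insert j J) p) \<partial>noise m a)
        = (\<integral>\<^sup>+p. g (shift_on J (p(j := p j + 1))) \<partial>noise m a)"
      using insert.hyps by (simp add: shift_on_insert)
    also have "\<dots> \<le> (\<integral>\<^sup>+p. g (shift_on J p) \<partial>noise m a) + ennreal (B / a)"
      by (rule nn_integral_noise_incr_le[OF a j gJ bnd B])
    also have "\<dots> \<le> (\<integral>\<^sup>+p. g p \<partial>noise m a) + ennreal (real (card J) * B / a) + ennreal (B / a)"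
      using insert.IH[OF J] by (simp add: add_right_mono)
    also have "\<dots> = (\<integral>\<^sup>+p. g p \<partial>noise m a) + ennreal (real (card (insert j J)) * B / a)"
    proof -
      have "ennreal (real (card J) * B / a) + ennreal (B / a)
          = ennreal (real (card J) * B / a + B / a)"
        using a B by (intro ennreal_plus[symmetric]) auto
      also have "real (card J) * B / a + B / a = real (card (insert j J)) * B / a"
        using insert.hyps by (simp add: add_divide_distrib[symmetric] algebra_simps)
      finally show ?thesis by (simp add: add.assoc)
    qed
    finally show ?case .
  qed
qed

lemma integral_noise_shift_le:
  fixes h :: "(nat \<Rightarrow> real) \<Rightarrow> real"
  assumes a: "a > 0" and J: "J \<subseteq> {1..m}" and h: "h \<in> borel_measurable (noise m a)"
    and bnd: "\<And>p. 0 \<le> h p \<and> h p \<le> B"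
  shows "(\<integral>p. h (shift_on J p) \<partial>noise m a) \<le> (\<integral>p. h p \<partial>noise m a) + real (card J) * B / a"
proof -
  interpret Q: prob_space "noise m a" by (rule prob_space_noise[OF a])
  have B: "B \<ge> 0" using bnd[of undefined] by linarith
  have hs: "(\<lambda>p. h (shift_on J p)) \<in> borel_measurable (noise m a)"
    by (rule measurable_compose[OF measurable_shift_on[OF J] h])
  have i1: "integrable (noise m a) h"
    by (rule Q.integrable_const_bound[where B=B]) (use bnd h in auto)
  have i2: "integrable (noise m a) (\<lambda>p. h (shift_on J p))"
    by (rule Q.integrable_const_bound[where B=B]) (use bnd hs in auto)
  have "ennreal (\<integral>p. h (shift_on J p) \<partial>noise m a) = (\<integral>\<^sup>+p. ennreal (h (shift_on J p)) \<partial>noise m a)"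
    by (rule nn_integral_eq_integral[OF i2, symmetric]) (use bnd in auto)
  also have "\<dots> \<le> (\<integral>\<^sup>+p. ennreal (h p) \<partial>noise m a) + ennreal (real (card J) * B / a)"
    using nn_integral_noise_shift_le[OF a J, where g="\<lambda>p. ennreal (h p)" and B=B] h bnd B by auto
  also have "(\<integral>\<^sup>+p. ennreal (h p) \<partial>noise m a) = ennreal (\<integral>p. h p \<partial>noise m a)"
    by (rule nn_integral_eq_integral[OF i1]) (use bnd in auto)
  also have "ennreal (\<integral>p. h p \<partial>noise m a) + ennreal (real (card J) * B / a)
      = ennreal ((\<integral>p. h p \<partial>noise m a) + real (card J) * B / a)"
    by (rule ennreal_plus[symmetric]) (use bnd B a in \<open>auto intro: integral_nonneg_AE\<close>)
  finally show ?thesis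
    by (subst (asm) ennreal_le_iff) (use bnd B a in \<open>auto intro!: add_nonneg_nonneg integral_nonneg_AE\<close>)
qed

lemma measurable_noise_component: "j \<in> {1..m} \<Longrightarrow> (\<lambda>p. p j) \<in> borel_measurable (noise m a)"
  unfolding noise_def by (simp add: measurable_cong_sets[OF refl sets_unif_interval[symmetric]])

lemma measurable_min_cost_ranking_noise:
  fixes F :: "(nat \<Rightarrow> nat) \<Rightarrow> real"
  shows "(\<lambda>p. F (min_cost_ranking m (\<lambda>j. s j + p j))) \<in> borel_measurable (noise m a)"
proof -
  define c where "c j p = (if j \<in> {1..m} then s j + p j else 0)" for j p
  have "c j \<in> borel_measurable (noise m a)" for j
  proof (cases "j \<in> {1..m}")
    case True
    then show ?thesis unfolding c_def using measurable_noise_component[OF True] by simp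
  next
    case False
    then have "c j = (\<lambda>_. 0)" unfolding c_def by (simp only: if_False)
    then show ?thesis by simp
  qed
  then have "(\<lambda>p. F (min_cost_ranking m (\<lambda>j. c j p))) \<in> borel_measurable (noise m a)"
    by (rule measurable_min_cost_ranking)
  moreover have "min_cost_ranking m (\<lambda>j. c j p) = min_cost_ranking m (\<lambda>j. s j + p j)" for p
    by (rule min_cost_ranking_cong) (simp add: c_def)
  ultimately show ?thesis by simp
qed

lemma measurable_min_cost_ranking_noise_seq:
  fixes F :: "(nat \<Rightarrow> nat) \<Rightarrow> real"
  assumes t: "t \<in> {1..T}"
  shows "(\<lambda>P. F (min_cost_ranking m (\<lambda>j. s j + P t j))) \<in> borel_measurable (noise_seq m T a)"
  using measurable_noise_seq_component[OF t measurable_min_cost_ranking_noise[of F m s a]] by simp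

lemma prec_at_nonneg:
  assumes "\<And>j. j \<in> {1..m} \<Longrightarrow> 0 \<le> u j"
  shows "0 \<le> prec_at m k \<sigma> u"
  unfolding prec_at_def using assms by (intro sum_nonneg) auto

lemma prec_at_le:
  assumes "\<And>j. j \<in> {1..m} \<Longrightarrow> u j \<le> 1" "\<And>j. j \<in> {1..m} \<Longrightarrow> 0 \<le> u j"
  shows "prec_at m k \<sigma> u \<le> real m"
proof -
  have "prec_at m k \<sigma> u \<le> (\<Sum>i\<in>{1..m}. 1)" unfolding prec_at_def
    by (rule sum_mono) (use assms in auto)
  then show ?thesis by simp
qed

lemma s_hat_Suc: "i \<ge> 1 \<Longrightarrow> s_hat r x (Suc i) j = s_hat r x i j + r (x i j) j"
  unfolding s_hat_def by (simp add: sum.atLeastLessThan_Suc)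

lemma s_hat_first: "s_hat r x 1 j = 0"
  unfolding s_hat_def by simp

lemma s_hat_upd: "s_hat r (x(i := y)) i j = s_hat r x i j"
  unfolding s_hat_def by (intro sum.cong refl) auto

lemma truncate_probes_apply: "i \<in> {1..K} \<Longrightarrow> j \<in> {1..m} \<Longrightarrow> truncate_probes m K x i j = x i j"
  unfolding truncate_probes_def by simp

lemma s_hat_truncate_probes:
  assumes "i \<in> {1..K}" "j \<in> {1..m}"
  shows "s_hat r (truncate_probes m K x) i j = s_hat r x i j"
  unfolding s_hat_def using assms by (intro sum.cong refl) (auto simp: truncate_probes_apply)

lemma rtop1f_action_eq:
  "rtop1f_action m T K top1 r (x, P) t = (if \<exists>j\<in>{1..m}. x (block_of T K t) j = t
      then top1 t (THE j. j \<in> {1..m} \<and> x (block_of T K t) j = t)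
      else min_cost_ranking m (\<lambda>j. s_hat r x (block_of T K t) j + P t j))"
  unfolding rtop1f_action_def min_cost_ranking_def rank_cost_def rankings_def Let_def by simp

lemma leader_top_bounds: "0 \<le> leader_top m k c j \<and> leader_top m k c j \<le> 1"
  unfolding leader_top_def top_indicator_def by simp

text \<open>The parameters of RTop-1F: L = T/K is the block length and the perturbations are uniform
  on [0, a]^m with a = 1/\<epsilon>.\<close>
locale rtop1f_setting =
  fixes m k T K L :: nat and a :: real and r :: "nat \<Rightarrow> nat \<Rightarrow> real"
    and top1 :: "nat \<Rightarrow> nat \<Rightarrow> nat \<Rightarrow> nat"
  assumes m1: "1 \<le> m" and dvd: "K dvd T" and L_def: "L = T div K" and mL: "m \<le> L" and a: "a > 0"
    and r01: "\<And>t j. t \<in> {1..T} \<Longrightarrow> j \<in> {1..m} \<Longrightarrow> r t j \<in> {0, 1}"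
begin

lemma block_length_pos: "L \<ge> 1" using m1 mL by simp

lemma reward_bounds: "t \<in> {1..T} \<Longrightarrow> j \<in> {1..m} \<Longrightarrow> 0 \<le> r t j \<and> r t j \<le> 1"
  using r01[of t j] by auto

lemma Union_blocks_T: "{1..T} = (\<Union>i\<in>{1..K}. block T K i)"
  using Union_blocks[OF dvd] block_length_pos L_def by simp

lemma block_subset: "i \<in> {1..K} \<Longrightarrow> block T K i \<subseteq> {1..T}"
  using Union_blocks_T by blast

lemma sum_over_blocks: "(\<Sum>t\<in>{1..T}. f t) = (\<Sum>i\<in>{1..K}. \<Sum>t\<in>block T K i. f t)"
proof -
  have "(\<Sum>t\<in>{1..T}. f t) = (\<Sum>t\<in>(\<Union>i\<in>{1..K}. block T K i). f t)" using Union_blocks_T by simp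
  also have "\<dots> = (\<Sum>i\<in>{1..K}. \<Sum>t\<in>block T K i. f t)"
    by (rule sum.UNION_disjoint) (use disjoint_blocks[of T K] block_length_pos L_def in \<open>auto simp: block_def\<close>)
  finally show ?thesis .
qed

lemma block_of_mem: "i \<in> {1..K} \<Longrightarrow> t \<in> block T K i \<Longrightarrow> block_of T K t = i"
  using block_of_eq[of t T K i] block_length_pos L_def by auto

lemma block_of_range: "t \<in> {1..T} \<Longrightarrow> block_of T K t \<in> {1..K}"
  using Union_blocks_T block_of_mem by blast

lemma probe_choices_nonempty_block: "i \<in> {1..K} \<Longrightarrow> probe_choices m T K i \<noteq> {}"
  using probe_choices_nonempty[of i m T K] mL L_def by auto

definition gain :: "(nat \<Rightarrow> nat \<Rightarrow> nat) \<times> (nat \<Rightarrow> nat \<Rightarrow> real) \<Rightarrow> real" where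
  "gain \<omega> = (\<Sum>t\<in>{1..T}. prec_at m k (rtop1f_action m T K top1 r \<omega> t) (r t))"

definition leader_gain :: "(nat \<Rightarrow> nat \<Rightarrow> nat) \<times> (nat \<Rightarrow> nat \<Rightarrow> real) \<Rightarrow> real" where
  "leader_gain \<omega> = (\<Sum>i\<in>{1..K}. \<Sum>t\<in>block T K i.
     dot m (leader_top m k (\<lambda>j. s_hat r (fst \<omega>) i j + snd \<omega> t j)) (r t))"

definition top_prob :: "(nat \<Rightarrow> real) \<Rightarrow> nat \<Rightarrow> real" where
  "top_prob s j = (\<integral>p. leader_top m k (\<lambda>j'. s j' + p j') j \<partial>noise m a)"

definition block_reward :: "nat \<Rightarrow> nat \<Rightarrow> real" where
  "block_reward i j = (\<Sum>t\<in>block T K i. r t j)"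

text \<open>Outside the at most m exploration rounds of a block the learner plays the perturbed
  leader; an exploration round loses at most k whatever ranking top1 it plays.\<close>
lemma prec_at_rtop1f_action_ge:
  assumes i: "i \<in> {1..K}" and t: "t \<in> block T K i"
  shows "prec_at m k (rtop1f_action m T K top1 r (x, P) t) (r t)
    \<ge> dot m (leader_top m k (\<lambda>j. s_hat r x i j + P t j)) (r t)
      - (if t \<in> x i ` {1..m} then real k else 0)"
proof -
  have tT: "t \<in> {1..T}" using block_subset[OF i] t by auto
  have rb: "\<And>j. j \<in> {1..m} \<Longrightarrow> 0 \<le> r t j \<and> r t j \<le> 1" using reward_bounds[OF tT] by auto
  show ?thesis
  proof (cases "t \<in> x i ` {1..m}")
    case True
    have "0 \<le> prec_at m k (rtop1f_action m T K top1 r (x, P) t) (r t)"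
      using rb by (intro prec_at_nonneg) auto
    moreover have "dot m (leader_top m k (\<lambda>j. s_hat r x i j + P t j)) (r t) \<le> real k"
      by (rule dot_leader_top_bounds(2)) (use rb in auto)
    ultimately show ?thesis using True by simp
  next
    case False
    then have "\<not> (\<exists>j\<in>{1..m}. x i j = t)" by auto
    then show ?thesis
      using False block_of_mem[OF i t] by (simp add: rtop1f_action_eq prec_at_eq_dot leader_top_def)
  qed
qed

lemma gain_block_ge:
  assumes i: "i \<in> {1..K}"
  shows "(\<Sum>t\<in>block T K i. prec_at m k (rtop1f_action m T K top1 r (x, P) t) (r t))
     \<ge> (\<Sum>t\<in>block T K i. dot m (leader_top m k (\<lambda>j. s_hat r x i j + P t j)) (r t)) - real m * real k"
proof -
  define X where "X = x i ` {1..m}"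
  have "real (card (block T K i \<inter> X)) \<le> real m"
    using card_mono[of X "block T K i \<inter> X"] card_image_le[of "{1..m}" "x i"] unfolding X_def by simp
  then have "(\<Sum>t\<in>block T K i. if t \<in> X then real k else 0) \<le> real m * real k"
    by (simp add: sum.If_cases block_def mult_right_mono)
  moreover have "(\<Sum>t\<in>block T K i. dot m (leader_top m k (\<lambda>j. s_hat r x i j + P t j)) (r t)
        - (if t \<in> X then real k else 0))
      \<le> (\<Sum>t\<in>block T K i. prec_at m k (rtop1f_action m T K top1 r (x, P) t) (r t))"
    unfolding X_def by (intro sum_mono prec_at_rtop1f_action_ge[OF i])
  ultimately show ?thesis by (simp add: sum_subtractf)
qed

lemma gain_ge_leader_gain: "gain (x, P) \<ge> leader_gain (x, P) - real K * real m * real k"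
proof -
  have "leader_gain (x, P) - real K * real m * real k
      = (\<Sum>i\<in>{1..K}. (\<Sum>t\<in>block T K i. dot m (leader_top m k (\<lambda>j. s_hat r x i j + P t j)) (r t))
          - real m * real k)"
    unfolding leader_gain_def by (simp add: sum_subtractf)
  also have "\<dots> \<le> (\<Sum>i\<in>{1..K}. \<Sum>t\<in>block T K i. prec_at m k (rtop1f_action m T K top1 r (x, P) t) (r t))"
    by (rule sum_mono) (rule gain_block_ge)
  also have "\<dots> = gain (x, P)" unfolding gain_def by (rule sum_over_blocks[symmetric])
  finally show ?thesis .
qed

lemma rtop1f_action_truncate_probes:
  assumes t: "t \<in> {1..T}"
  shows "rtop1f_action m T K top1 r (truncate_probes m K x, P) t
      = rtop1f_action m T K top1 r (x, P) t"
proof -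
  define i where "i = block_of T K t"
  have i: "i \<in> {1..K}" unfolding i_def by (rule block_of_range[OF t])
  have e1: "(\<exists>j\<in>{1..m}. truncate_probes m K x i j = t) = (\<exists>j\<in>{1..m}. x i j = t)"
    using i by (simp add: truncate_probes_apply)
  have e2: "(\<lambda>j. j \<in> {1..m} \<and> truncate_probes m K x i j = t) = (\<lambda>j. j \<in> {1..m} \<and> x i j = t)"
    using i by (auto simp: truncate_probes_apply)
  have e3: "min_cost_ranking m (\<lambda>j. s_hat r (truncate_probes m K x) i j + P t j)
      = min_cost_ranking m (\<lambda>j. s_hat r x i j + P t j)"
    by (rule min_cost_ranking_cong) (simp add: s_hat_truncate_probes[OF i])
  show ?thesis unfolding rtop1f_action_eq i_def[symmetric] e1 e2 e3 ..
qed

lemma gain_truncate_probes: "gain (x, P) = gain (truncate_probes m K x, P)"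
  unfolding gain_def by (intro sum.cong refl) (simp add: rtop1f_action_truncate_probes)

lemma leader_gain_truncate_probes: "leader_gain (x, P) = leader_gain (truncate_probes m K x, P)"
  unfolding leader_gain_def fst_conv snd_conv
  by (intro sum.cong refl arg_cong2[where f="dot m"] leader_top_cong) (simp add: s_hat_truncate_probes)

lemma measurable_gain: "(\<lambda>P. gain (h, P)) \<in> borel_measurable (noise_seq m T a)"
  unfolding gain_def
proof (rule borel_measurable_sum)
  fix t assume t: "t \<in> {1..T}"
  show "(\<lambda>P. prec_at m k (rtop1f_action m T K top1 r (h, P) t) (r t))
      \<in> borel_measurable (noise_seq m T a)"
  proof (cases "\<exists>j\<in>{1..m}. h (block_of T K t) j = t")
    case True
    then show ?thesis unfolding rtop1f_action_eq by simp
  next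
    case False
    then have "(\<lambda>P. prec_at m k (rtop1f_action m T K top1 r (h, P) t) (r t))
        = (\<lambda>P. (\<lambda>\<sigma>. prec_at m k \<sigma> (r t)) (min_cost_ranking m (\<lambda>j. s_hat r h (block_of T K t) j + P t j)))"
      unfolding rtop1f_action_eq by simp
    also have "\<dots> \<in> borel_measurable (noise_seq m T a)"
      by (rule measurable_min_cost_ranking_noise_seq[OF t])
    finally show ?thesis .
  qed
qed

lemma measurable_leader_gain: "(\<lambda>P. leader_gain (h, P)) \<in> borel_measurable (noise_seq m T a)"
  unfolding leader_gain_def fst_conv snd_conv
proof (intro borel_measurable_sum)
  fix i t assume i: "i \<in> {1..K}" and t: "t \<in> block T K i"
  have tT: "t \<in> {1..T}" using block_subset[OF i] t by auto
  have "(\<lambda>P. dot m (leader_top m k (\<lambda>j. s_hat r h i j + P t j)) (r t))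
      = (\<lambda>P. (\<lambda>\<sigma>. dot m (top_indicator k \<sigma>) (r t)) (min_cost_ranking m (\<lambda>j. s_hat r h i j + P t j)))"
    unfolding leader_top_def ..
  also have "\<dots> \<in> borel_measurable (noise_seq m T a)"
    by (rule measurable_min_cost_ranking_noise_seq[OF tT])
  finally show "(\<lambda>P. dot m (leader_top m k (\<lambda>j. s_hat r h i j + P t j)) (r t))
      \<in> borel_measurable (noise_seq m T a)" .
qed

lemma abs_gain_le: "\<bar>gain z\<bar> \<le> real T * real m"
proof -
  have "0 \<le> gain z" unfolding gain_def
    by (intro sum_nonneg prec_at_nonneg) (use reward_bounds in auto)
  moreover have "gain z \<le> (\<Sum>t\<in>{1..T}. real m)" unfolding gain_def
    by (intro sum_mono prec_at_le) (use reward_bounds in auto)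
  ultimately show ?thesis by simp
qed

lemma abs_leader_gain_le: "\<bar>leader_gain z\<bar> \<le> real T * real k"
proof -
  have "0 \<le> leader_gain z" unfolding leader_gain_def
    by (intro sum_nonneg dot_leader_top_bounds(1)) (use reward_bounds block_subset in blast)
  moreover have "leader_gain z \<le> (\<Sum>i\<in>{1..K}. \<Sum>t\<in>block T K i. real k)" unfolding leader_gain_def
    by (intro sum_mono dot_leader_top_bounds(2)) (use reward_bounds block_subset in blast)
  moreover have "(\<Sum>i\<in>{1..K}. \<Sum>t\<in>block T K i. real k) = real T * real k"
    using sum_over_blocks[of "\<lambda>_. real k"] by simp
  ultimately show ?thesis by simp
qed

lemma measurable_leader_top: "(\<lambda>p. leader_top m k (\<lambda>j'. s j' + p j') j)
    \<in> borel_measurable (noise m a)"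
  unfolding leader_top_def using measurable_min_cost_ranking_noise[of "\<lambda>\<sigma>. top_indicator k \<sigma> j" m s a] by simp

lemma integrable_leader_top: "integrable (noise m a) (\<lambda>p. leader_top m k (\<lambda>j'. s j' + p j') j)"
proof -
  interpret Q: prob_space "noise m a" by (rule prob_space_noise[OF a])
  show ?thesis by (rule Q.integrable_const_bound[where B=1]) (use leader_top_bounds measurable_leader_top in auto)
qed

lemma measurable_dot_leader_top: "(\<lambda>p. dot m (leader_top m k (\<lambda>j. s j + p j)) u)
    \<in> borel_measurable (noise m a)"
  unfolding dot_def by (intro borel_measurable_sum borel_measurable_times measurable_leader_top) simp

lemma integrable_dot_leader_top: "integrable (noise m a) (\<lambda>p. dot m (leader_top m k (\<lambda>j. s j + p j)) u)"
proof -
  have "integrable (noise m a) (\<lambda>p. \<Sum>j\<in>{1..m}. leader_top m k (\<lambda>j'. s j' + p j') j * u j)"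
    by (intro Bochner_Integration.integrable_sum integrable_mult_left integrable_leader_top)
  then show ?thesis unfolding dot_def .
qed

lemma integral_dot_leader_top: "(\<integral>p. dot m (leader_top m k (\<lambda>j. s j + p j)) u \<partial>noise m a)
    = (\<Sum>j\<in>{1..m}. top_prob s j * u j)"
proof -
  have "(\<integral>p. dot m (leader_top m k (\<lambda>j. s j + p j)) u \<partial>noise m a)
      = (\<Sum>j\<in>{1..m}. (\<integral>p. leader_top m k (\<lambda>j'. s j' + p j') j * u j \<partial>noise m a))"
    unfolding dot_def by (rule Bochner_Integration.integral_sum) (intro integrable_mult_left integrable_leader_top)
  also have "\<dots> = (\<Sum>j\<in>{1..m}. top_prob s j * u j)" unfolding top_prob_def by simp
  finally show ?thesis .
qed

lemma integral_leader_gain: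
  "(\<integral>P. leader_gain (x, P) \<partial>noise_seq m T a)
    = (\<Sum>i\<in>{1..K}. \<Sum>j\<in>{1..m}. top_prob (\<lambda>j. s_hat r x i j) j * block_reward i j)"
proof -
  interpret N: prob_space "noise_seq m T a" by (rule prob_space_noise_seq[OF a])
  define f where "f i t P = dot m (leader_top m k (\<lambda>j. s_hat r x i j + P t j)) (r t)" for i t P
  have round: "integrable (noise_seq m T a) (f i t)"
    "(\<integral>P. f i t P \<partial>noise_seq m T a) = (\<Sum>j\<in>{1..m}. top_prob (\<lambda>j. s_hat r x i j) j * r t j)"
    if i: "i \<in> {1..K}" and t: "t \<in> block T K i" for i t
  proof -
    have tT: "t \<in> {1..T}" using block_subset[OF i] t by auto
    show "integrable (noise_seq m T a) (f i t)"
      using dot_leader_top_bounds[OF reward_bounds[OF tT]]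
        measurable_noise_seq_component[OF tT measurable_dot_leader_top]
      unfolding f_def by (intro N.integrable_const_bound[where B="real k"]) auto
    show "(\<integral>P. f i t P \<partial>noise_seq m T a) = (\<Sum>j\<in>{1..m}. top_prob (\<lambda>j. s_hat r x i j) j * r t j)"
      unfolding f_def integral_noise_seq_component[OF a tT measurable_dot_leader_top]
      by (rule integral_dot_leader_top)
  qed
  have "(\<integral>P. leader_gain (x, P) \<partial>noise_seq m T a)
      = (\<Sum>i\<in>{1..K}. \<Sum>t\<in>block T K i. \<integral>P. f i t P \<partial>noise_seq m T a)"
    unfolding leader_gain_def fst_conv snd_conv f_def[symmetric] using round(1)
    by (simp add: Bochner_Integration.integral_sum Bochner_Integration.integrable_sum)
  also have "\<dots> = (\<Sum>i\<in>{1..K}. \<Sum>t\<in>block T K i. \<Sum>j\<in>{1..m}. top_prob (\<lambda>j. s_hat r x i j) j * r t j)"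
    using round(2) by (intro sum.cong refl) auto
  also have "\<dots> = (\<Sum>i\<in>{1..K}. \<Sum>j\<in>{1..m}. top_prob (\<lambda>j. s_hat r x i j) j * block_reward i j)"
    unfolding block_reward_def sum_distrib_left by (rule sum.cong[OF refl]) (rule sum.swap)
  finally show ?thesis .
qed

lemma expected_gain_ge:
  "(\<integral>\<omega>. gain \<omega> \<partial>(probe_measure m T K \<Otimes>\<^sub>M noise_seq m T a))
    \<ge> (\<Sum>x\<in>probe_profiles m T K. \<Sum>i\<in>{1..K}. \<Sum>j\<in>{1..m}. top_prob (\<lambda>j. s_hat r x i j) j * block_reward i j)
        / real (card (probe_profiles m T K))
      - real K * real m * real k"
proof -
  let ?\<Omega> = "probe_measure m T K \<Otimes>\<^sub>M noise_seq m T a"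
  interpret P: pair_prob_space "probe_measure m T K" "noise_seq m T a"
    unfolding pair_prob_space_def pair_sigma_finite_def
    using prob_space_probe_measure prob_space_noise_seq[OF a]
      by (simp add: prob_space_imp_sigma_finite)
  note integral_gain = integral_probe_noise[OF a probe_choices_nonempty_block _ measurable_gain abs_gain_le]
  note integral_leader = integral_probe_noise[OF a probe_choices_nonempty_block _ measurable_leader_gain
      abs_leader_gain_le]
  have "integral\<^sup>L ?\<Omega> leader_gain - real K * real m * real k
      = (\<integral>\<omega>. leader_gain \<omega> - real K * real m * real k \<partial>?\<Omega>)"
    using integral_leader(1) leader_gain_truncate_probes by (simp add: P.prob_space)
  also have "\<dots> \<le> integral\<^sup>L ?\<Omega> gain"
    using integral_leader(1) integral_gain(1) gain_truncate_probes leader_gain_truncate_probes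
      gain_ge_leader_gain
    by (intro integral_mono) auto
  finally show ?thesis
    using integral_leader(2) leader_gain_truncate_probes by (simp add: integral_leader_gain)
qed

lemma probe_profiles_mem:
  "x \<in> probe_profiles m T K \<Longrightarrow> i \<in> {1..K} \<Longrightarrow> j \<in> {1..m} \<Longrightarrow> x i j \<in> block T K i"
  unfolding probe_profiles_def probe_choices_def by (auto simp: PiE_iff)

lemma probed_reward_01:
  "x \<in> probe_profiles m T K \<Longrightarrow> i \<in> {1..K} \<Longrightarrow> j \<in> {1..m} \<Longrightarrow> r (x i j) j \<in> {0, 1}"
  using probe_profiles_mem block_subset r01 by blast

lemma card_probe_choices_pos: "i \<in> {1..K} \<Longrightarrow> card (probe_choices m T K i) > 0"
  using probe_choices_nonempty_block finite_probe_choices by (simp add: card_gt_0_iff)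

lemma sum_profiles_probed:
  fixes F :: "(nat \<Rightarrow> nat \<Rightarrow> nat) \<Rightarrow> real"
  assumes i: "i \<in> {1..K}" and j: "j \<in> {1..m}"
    and inv: "\<And>x y. x \<in> probe_profiles m T K \<Longrightarrow> y \<in> probe_choices m T K i
      \<Longrightarrow> F (x(i := y)) = F x"
  shows "real L * (\<Sum>x\<in>probe_profiles m T K. F x * r (x i j) j)
      = (\<Sum>x\<in>probe_profiles m T K. F x) * block_reward i j"
proof -
  define c where "c = real (card (probe_choices m T K i))"
  have c: "c > 0" unfolding c_def using card_probe_choices_pos[OF i] by simp
  have A: "(\<Sum>x\<in>probe_profiles m T K. F x * r (x i j) j) * c
      = (\<Sum>x\<in>probe_profiles m T K. F x) * (\<Sum>y\<in>probe_choices m T K i. r (y j) j)"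
    unfolding c_def probe_profiles_def
    by (rule sum_PiE_mult_component[where g="\<lambda>y. r (y j) j"])
       (use i inv in \<open>auto simp: probe_profiles_def\<close>)
  have B: "real L * (\<Sum>y\<in>probe_choices m T K i. r (y j) j) = c * block_reward i j"
    using sum_injections_component[OF j, where g="\<lambda>t. r t j" and B="block T K i"]
      card_block[of i T K] i L_def
    unfolding c_def block_reward_def probe_choices_eq by simp
  have "real L * (\<Sum>x\<in>probe_profiles m T K. F x * r (x i j) j) * c
      = (\<Sum>x\<in>probe_profiles m T K. F x) * (real L * (\<Sum>y\<in>probe_choices m T K i. r (y j) j))"
    using A by (simp add: mult_ac)
  also have "\<dots> = (\<Sum>x\<in>probe_profiles m T K. F x) * block_reward i j * c"
    unfolding B by (simp add: mult_ac)
  finally show ?thesis using c by simp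
qed

lemma sum_profiles_top_prob:
  assumes i: "i \<in> {1..K}" and j: "j \<in> {1..m}"
  shows "real L * (\<Sum>x\<in>probe_profiles m T K. top_prob (\<lambda>j. s_hat r x i j) j * r (x i j) j)
       = (\<Sum>x\<in>probe_profiles m T K. top_prob (\<lambda>j. s_hat r x i j) j) * block_reward i j"
  by (rule sum_profiles_probed[OF i j]) (simp add: s_hat_upd)

lemma sum_profiles_probed_reward:
  assumes i: "i \<in> {1..K}" and j: "j \<in> {1..m}"
  shows "real L * (\<Sum>x\<in>probe_profiles m T K. r (x i j) j)
      = real (card (probe_profiles m T K)) * block_reward i j"
  using sum_profiles_probed[OF i j, of "\<lambda>_. 1"] by simp

text \<open>The 0/1 probed rewards of block i enter the scores as a unit shift of the perturbation
  on the objects J with reward 1, which moves a bounded expectation by at most |J| k / a.\<close>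
lemma top_prob_shift_le:
  assumes x: "x \<in> probe_profiles m T K" and i: "i \<in> {1..K}"
  shows "(\<Sum>j\<in>{1..m}. top_prob (\<lambda>j. s_hat r x (Suc i) j) j * r (x i j) j)
      \<le> (\<Sum>j\<in>{1..m}. top_prob (\<lambda>j. s_hat r x i j) j * r (x i j) j) + real m * real k / a"
proof -
  define v where "v = (\<lambda>j. r (x i j) j)"
  define J where "J = {j\<in>{1..m}. v j = 1}"
  define h where "h = (\<lambda>p. dot m (leader_top m k (\<lambda>j. s_hat r x i j + p j)) v)"
  have v01: "j \<in> {1..m} \<Longrightarrow> v j \<in> {0, 1}" for j unfolding v_def using probed_reward_01[OF x i] by simp
  have vb: "j \<in> {1..m} \<Longrightarrow> 0 \<le> v j \<and> v j \<le> 1" for j using v01[of j] by auto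
  have hm: "h \<in> borel_measurable (noise m a)" unfolding h_def by (rule measurable_dot_leader_top)
  have hb: "0 \<le> h p \<and> h p \<le> real k" for p
    unfolding h_def using dot_leader_top_bounds[where u=v and m=m and k=k] vb by blast
  have J: "J \<subseteq> {1..m}" unfolding J_def by auto
  have st: "(\<integral>p. h (shift_on J p) \<partial>noise m a) \<le> (\<integral>p. h p \<partial>noise m a) + real (card J) * real k / a"
    by (rule integral_noise_shift_le[OF a J hm hb])
  have eq1: "(\<integral>p. h p \<partial>noise m a) = (\<Sum>j\<in>{1..m}. top_prob (\<lambda>j. s_hat r x i j) j * v j)"
    unfolding h_def by (rule integral_dot_leader_top)
  have eq2: "h (shift_on J p) = dot m (leader_top m k (\<lambda>j. s_hat r x (Suc i) j + p j)) v" for p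
  proof -
    have "leader_top m k (\<lambda>j. s_hat r x i j + shift_on J p j)
        = leader_top m k (\<lambda>j. s_hat r x (Suc i) j + p j)"
    proof (rule leader_top_cong)
      fix j assume j: "j \<in> {1..m}"
      have si: "s_hat r x (Suc i) j = s_hat r x i j + v j" unfolding v_def using i
        by (simp add: s_hat_Suc)
      show "s_hat r x i j + shift_on J p j = s_hat r x (Suc i) j + p j"
        using v01[OF j] j unfolding si shift_on_def J_def by auto
    qed
    then show ?thesis unfolding h_def by simp
  qed
  have eq3: "(\<integral>p. h (shift_on J p) \<partial>noise m a)
      = (\<Sum>j\<in>{1..m}. top_prob (\<lambda>j. s_hat r x (Suc i) j) j * v j)"
    unfolding eq2 by (rule integral_dot_leader_top)
  have cJ: "real (card J) * real k / a \<le> real m * real k / a"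
  proof -
    have "card J \<le> m" using card_mono[OF _ J] by simp
    then have "real (card J) * real k \<le> real m * real k" by (intro mult_right_mono) auto
    then show ?thesis using a by (simp add: divide_right_mono)
  qed
  show ?thesis using st cJ unfolding eq1 eq3 v_def by linarith
qed

lemma top_prob_regret:
  assumes x: "x \<in> probe_profiles m T K" and \<sigma>: "\<sigma> \<in> rankings m"
  shows "dot m (top_indicator k \<sigma>) (\<lambda>j. s_hat r x (Suc K) j) - real k * a
      \<le> (\<Sum>i\<in>{1..K}. \<Sum>j\<in>{1..m}. top_prob (\<lambda>j. s_hat r x (Suc i) j) j * r (x i j) j)"
proof -
  interpret Q: prob_space "noise m a" by (rule prob_space_noise[OF a])
  define c where "c = dot m (top_indicator k \<sigma>) (\<lambda>j. s_hat r x (Suc K) j) - real k * a"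
  define G where "G = (\<lambda>p. \<Sum>i\<in>{1..K}. dot m (leader_top m k (\<lambda>j. s_hat r x (Suc i) j + p j)) (\<lambda>j. r (x i j) j))"
  have Gi: "integrable (noise m a) G" unfolding G_def
    by (intro Bochner_Integration.integrable_sum integrable_dot_leader_top)
  have eqG: "(\<integral>p. G p \<partial>noise m a) = (\<Sum>i\<in>{1..K}. \<Sum>j\<in>{1..m}. top_prob (\<lambda>j. s_hat r x (Suc i) j) j * r (x i j) j)"
    unfolding G_def
    by (subst Bochner_Integration.integral_sum) (auto intro: integrable_dot_leader_top simp: integral_dot_leader_top)
  have AEc: "AE p in noise m a. c \<le> G p"
    using AE_noise_bounds[OF a, of m]
  proof eventually_elim
    case (elim p)
    define X where "X = (\<lambda>n j. s_hat r x (Suc n) j + p j)"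
    define y where "y = (\<lambda>n j. r (x n j) j)"
    have step: "X (Suc n) j = X n j + y (Suc n) j" for n j
      unfolding X_def y_def by (simp add: s_hat_Suc)
    have btl': "dot m (leader_top m k (X K)) (X K) - dot m (leader_top m k (X 0)) (X 0)
        \<le> (\<Sum>i\<in>{1..K}. dot m (leader_top m k (X i)) (y i))"
      by (rule be_the_leader[where x=X and y=y]) (rule step)
    have "dot m (top_indicator k \<sigma>) (X K) \<le> dot m (leader_top m k (X K)) (X K)"
      by (rule dot_le_leader_top[OF \<sigma>])
    moreover have "dot m (top_indicator k \<sigma>) (X K)
        = dot m (top_indicator k \<sigma>) (\<lambda>j. s_hat r x (Suc K) j) + dot m (top_indicator k \<sigma>) p"
      unfolding X_def by (rule dot_add)
    moreover have "0 \<le> dot m (top_indicator k \<sigma>) p"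
      by (rule dot_top_indicator_bounds(1)[OF \<sigma>, where B=a]) (use elim a in auto)
    moreover have "dot m (leader_top m k (X 0)) (X 0) \<le> real k * a"
    proof -
      have x0: "X 0 j = p j" for j unfolding X_def using s_hat_first[of r x j] by simp
      show ?thesis unfolding leader_top_def
        by (rule dot_top_indicator_bounds(2)[OF min_cost_ranking_in]) (use elim a x0 in auto)
    qed
    moreover have "(\<Sum>i\<in>{1..K}. dot m (leader_top m k (X i)) (y i)) = G p"
      unfolding G_def X_def y_def ..
    ultimately show ?case using btl' unfolding c_def by linarith
  qed
  have "(\<integral>p. c \<partial>noise m a) \<le> (\<integral>p. G p \<partial>noise m a)"
    by (rule integral_mono_AE[OF _ Gi AEc]) simp
  then show ?thesis unfolding eqG c_def[symmetric] by (simp add: Q.prob_space)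
qed

lemma top_prob_regret_probed:
  assumes x: "x \<in> probe_profiles m T K" and \<sigma>: "\<sigma> \<in> rankings m"
  shows "dot m (top_indicator k \<sigma>) (\<lambda>j. s_hat r x (Suc K) j) - real k * a - real K * (real m * real k / a)
      \<le> (\<Sum>i\<in>{1..K}. \<Sum>j\<in>{1..m}. top_prob (\<lambda>j. s_hat r x i j) j * r (x i j) j)"
proof -
  have "(\<Sum>i\<in>{1..K}. \<Sum>j\<in>{1..m}. top_prob (\<lambda>j. s_hat r x (Suc i) j) j * r (x i j) j)
      \<le> (\<Sum>i\<in>{1..K}. (\<Sum>j\<in>{1..m}. top_prob (\<lambda>j. s_hat r x i j) j * r (x i j) j) + real m * real k / a)"
    by (rule sum_mono) (rule top_prob_shift_le[OF x])
  also have "\<dots> = (\<Sum>i\<in>{1..K}. \<Sum>j\<in>{1..m}. top_prob (\<lambda>j. s_hat r x i j) j * r (x i j) j) + real K * (real m * real k / a)"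
    by (simp add: sum.distrib)
  finally show ?thesis using top_prob_regret[OF x \<sigma>] by linarith
qed

text \<open>Unbiasedness of the exploration: averaged over the probe profiles, the probed reward
  of object j in block i stands for its block reward, and the leader of block i does not
  depend on the probes of block i.\<close>
lemma sum_profiles_top_prob_block_reward:
  "(\<Sum>x\<in>probe_profiles m T K. \<Sum>i\<in>{1..K}. \<Sum>j\<in>{1..m}. top_prob (\<lambda>j. s_hat r x i j) j * block_reward i j)
    = real L * (\<Sum>x\<in>probe_profiles m T K. \<Sum>i\<in>{1..K}. \<Sum>j\<in>{1..m}.
        top_prob (\<lambda>j. s_hat r x i j) j * r (x i j) j)"
proof -
  define S where "S = probe_profiles m T K"
  have "(\<Sum>x\<in>S. \<Sum>i\<in>{1..K}. \<Sum>j\<in>{1..m}. top_prob (\<lambda>j. s_hat r x i j) j * block_reward i j)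
      = (\<Sum>i\<in>{1..K}. \<Sum>j\<in>{1..m}. (\<Sum>x\<in>S. top_prob (\<lambda>j. s_hat r x i j) j) * block_reward i j)"
    by (simp add: sum.swap[of _ S] sum_distrib_right)
  also have "\<dots> = (\<Sum>i\<in>{1..K}. \<Sum>j\<in>{1..m}. real L * (\<Sum>x\<in>S. top_prob (\<lambda>j. s_hat r x i j) j * r (x i j) j))"
    unfolding S_def by (intro sum.cong refl sum_profiles_top_prob[symmetric]) auto
  also have "\<dots> = real L * (\<Sum>x\<in>S. \<Sum>i\<in>{1..K}. \<Sum>j\<in>{1..m}. top_prob (\<lambda>j. s_hat r x i j) j * r (x i j) j)"
    by (simp add: sum_distrib_left sum.swap[of _ S])
  finally show ?thesis unfolding S_def .
qed

lemma sum_profiles_final_cost: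
  "real L * (\<Sum>x\<in>probe_profiles m T K. dot m (top_indicator k \<sigma>) (\<lambda>j. s_hat r x (Suc K) j))
    = real (card (probe_profiles m T K)) * (\<Sum>t\<in>{1..T}. prec_at m k \<sigma> (r t))"
proof -
  define S where "S = probe_profiles m T K"
  have "{1..<Suc K} = {1..K}" by auto
  then have "real L * (\<Sum>x\<in>S. dot m (top_indicator k \<sigma>) (\<lambda>j. s_hat r x (Suc K) j))
      = (\<Sum>j\<in>{1..m}. top_indicator k \<sigma> j * (\<Sum>i\<in>{1..K}. real L * (\<Sum>x\<in>S. r (x i j) j)))"
    unfolding dot_def s_hat_def by (simp add: sum_distrib_left sum.swap[of _ S] mult_ac)
  also have "\<dots> = (\<Sum>j\<in>{1..m}. top_indicator k \<sigma> j * (real (card S) * (\<Sum>i\<in>{1..K}. block_reward i j)))"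
    unfolding S_def
    by (intro sum.cong refl) (simp add: sum_profiles_probed_reward[symmetric] sum_distrib_left mult_ac)
  also have "\<dots> = real (card S) * (\<Sum>j\<in>{1..m}. top_indicator k \<sigma> j * (\<Sum>t\<in>{1..T}. r t j))"
    unfolding block_reward_def sum_over_blocks[symmetric] by (simp add: sum_distrib_left mult_ac)
  also have "(\<Sum>j\<in>{1..m}. top_indicator k \<sigma> j * (\<Sum>t\<in>{1..T}. r t j))
      = (\<Sum>t\<in>{1..T}. prec_at m k \<sigma> (r t))"
    unfolding prec_at_eq_dot dot_def sum_distrib_left by (rule sum.swap)
  finally show ?thesis unfolding S_def .
qed

lemma expected_gain_ge_ranking:
  assumes \<sigma>: "\<sigma> \<in> rankings m"
  shows "(\<integral>\<omega>. gain \<omega> \<partial>(probe_measure m T K \<Otimes>\<^sub>M noise_seq m T a))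
     \<ge> (\<Sum>t\<in>{1..T}. prec_at m k \<sigma> (r t)) - real L * (real k * a + real K * (real m * real k / a))
       - real K * real m * real k"
proof -
  define S where "S = probe_profiles m T K"
  define c where "c = real k * a + real K * (real m * real k / a)"
  define D where "D = (\<lambda>x. dot m (top_indicator k \<sigma>) (\<lambda>j. s_hat r x (Suc K) j))"
  have n: "real (card S) > 0"
    unfolding S_def using finite_probe_profiles probe_profiles_nonempty[OF probe_choices_nonempty_block]
    by (simp add: card_gt_0_iff)
  have "real (card S) * (\<Sum>t\<in>{1..T}. prec_at m k \<sigma> (r t)) - real L * real (card S) * c
      = real L * (\<Sum>x\<in>S. D x) - real L * real (card S) * c"
    using sum_profiles_final_cost[of \<sigma>] unfolding S_def D_def by simp
  also have "\<dots> = real L * (\<Sum>x\<in>S. D x - c)"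
    by (simp add: sum_subtractf algebra_simps)
  also have "\<dots> \<le> real L * (\<Sum>x\<in>S. \<Sum>i\<in>{1..K}. \<Sum>j\<in>{1..m}. top_prob (\<lambda>j. s_hat r x i j) j * r (x i j) j)"
    using top_prob_regret_probed[OF _ \<sigma>] unfolding S_def D_def c_def
    by (intro mult_left_mono sum_mono) (auto simp: diff_diff_eq)
  also have "\<dots> = (\<Sum>x\<in>S. \<Sum>i\<in>{1..K}. \<Sum>j\<in>{1..m}. top_prob (\<lambda>j. s_hat r x i j) j * block_reward i j)"
    unfolding S_def by (rule sum_profiles_top_prob_block_reward[symmetric])
  finally have "(\<Sum>t\<in>{1..T}. prec_at m k \<sigma> (r t)) - real L * c
      \<le> (\<Sum>x\<in>S. \<Sum>i\<in>{1..K}. \<Sum>j\<in>{1..m}. top_prob (\<lambda>j. s_hat r x i j) j * block_reward i j) / real (card S)"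
    using n by (simp add: field_simps)
  with expected_gain_ge show ?thesis unfolding S_def c_def by linarith
qed

lemma expected_gain_ge_Max:
  "(\<integral>\<omega>. gain \<omega> \<partial>(probe_measure m T K \<Otimes>\<^sub>M noise_seq m T a))
     \<ge> Max {\<Sum>t\<in>{1..T}. prec_at m k \<sigma> (r t) | \<sigma>. \<sigma> permutes {1..m}}
       - real k * (real L * a + real L * (real K * real m / a) + real K * real m)"
proof -
  define F where "F = (\<lambda>\<sigma>. \<Sum>t\<in>{1..T}. prec_at m k \<sigma> (r t))"
  have "{\<Sum>t\<in>{1..T}. prec_at m k \<sigma> (r t) | \<sigma>. \<sigma> permutes {1..m}} = F ` rankings m"
    unfolding F_def rankings_def by auto
  moreover have "Max (F ` rankings m) \<in> F ` rankings m"
    using finite_rankings rankings_nonempty by (intro Max_in) auto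
  ultimately obtain \<sigma> where "\<sigma> \<in> rankings m"
    and "Max {\<Sum>t\<in>{1..T}. prec_at m k \<sigma> (r t) | \<sigma>. \<sigma> permutes {1..m}} = F \<sigma>" by auto
  with expected_gain_ge_ranking show ?thesis unfolding F_def by (simp add: algebra_simps)
qed

end

lemma rtop1f_parameters:
  fixes m T K L :: nat
  assumes m: "m \<ge> 1" and T: "T \<ge> 1" and K: "real K = real m powr (-1/3) * real T powr (2/3)"
    and TKL: "T = K * L"
  shows "real L * sqrt (real m * real K) = real m powr (2/3) * real T powr (2/3)"
    and "real K * real m = real m powr (2/3) * real T powr (2/3)"
proof -
  define u where "u = real m powr (1/3)"
  define v where "v = real T powr (1/3)"
  have m0: "real m > 0" and T0: "real T > 0" using m T by auto
  have u0: "u > 0" and v0: "v > 0" unfolding u_def v_def using m0 T0 by auto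
  have pw: "x powr (real n * (1/3)) = (x powr (1/3)) ^ n" if "x > 0" for x :: real and n :: nat
    using powr_power[of x "1/3" n] that by simp
  have hm: "real m = u ^ 3" unfolding u_def using pw[OF m0, of 3] m0 by simp
  have hT: "real T = v ^ 3" unfolding v_def using pw[OF T0, of 3] T0 by simp
  have m23: "real m powr (2/3) = u ^ 2" unfolding u_def using pw[OF m0, of 2] by simp
  have T23: "real T powr (2/3) = v ^ 2" unfolding v_def using pw[OF T0, of 2] by simp
  have "real m powr (-1/3) = 1 / u" unfolding u_def
    using powr_minus_divide[of "real m" "1/3"] by simp
  then have hK: "real K = v ^ 2 / u" using K T23 by simp
  have "v ^ 3 = v ^ 2 / u * real L" using TKL hT hK by (metis of_nat_mult)
  then have hL: "real L = u * v" using u0 v0 by (simp add: field_simps power_eq_if)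
  have "real m * real K = (u * v) ^ 2" using hm hK u0 by (simp add: field_simps power_eq_if)
  then have "sqrt (real m * real K) = u * v" using u0 v0 by simp
  then show "real L * sqrt (real m * real K) = real m powr (2/3) * real T powr (2/3)"
    unfolding hL m23 T23 by (simp add: power2_eq_square)
  show "real K * real m = real m powr (2/3) * real T powr (2/3)"
    unfolding m23 T23 unfolding hK hm using u0 by (simp add: field_simps power_eq_if)
qed

theorem theorem5:
  shows "\<exists>C>0. \<forall>(m::nat) (k::nat) (T::nat) (K::nat) (\<epsilon>::real) (r::nat \<Rightarrow> nat \<Rightarrow> real)
      (top1::nat \<Rightarrow> nat \<Rightarrow> nat \<Rightarrow> nat).
    1 \<le> m \<and> 1 \<le> k \<and> 1 \<le> K \<and> K dvd T \<and> m \<le> T div K \<and>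
    real K = real m powr (-1/3) * real T powr (2/3) \<and>
    \<epsilon> = sqrt (1 / (real m * real K)) \<and>
    (\<forall>t\<in>{1..T}. \<forall>j\<in>{1..m}. r t j \<in> {0, 1}) \<and>
    (\<forall>t\<in>{1..T}. \<forall>j\<in>{1..m}. top1 t j permutes {1..m} \<and> top1 t j j = 1)
    \<longrightarrow>
    (\<integral>\<omega>. (\<Sum>t\<in>{1..T}. prec_at m k (rtop1f_action m T K top1 r \<omega> t) (r t))
        \<partial>rtop1f_space m T K \<epsilon>)
      \<ge> Max {\<Sum>t\<in>{1..T}. prec_at m k \<sigma> (r t) | \<sigma>. \<sigma> permutes {1..m}}
         - C * real k * real m powr (2/3) * real T powr (2/3)"
proof (intro exI[of _ 3] conjI allI impI)
  fix m k T K :: nat and \<epsilon> :: real and r :: "nat \<Rightarrow> nat \<Rightarrow> real" and top1 :: "nat \<Rightarrow> nat \<Rightarrow> nat \<Rightarrow> nat"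
  assume H: "1 \<le> m \<and> 1 \<le> k \<and> 1 \<le> K \<and> K dvd T \<and> m \<le> T div K \<and>
    real K = real m powr (-1/3) * real T powr (2/3) \<and> \<epsilon> = sqrt (1 / (real m * real K)) \<and>
    (\<forall>t\<in>{1..T}. \<forall>j\<in>{1..m}. r t j \<in> {0, 1}) \<and>
    (\<forall>t\<in>{1..T}. \<forall>j\<in>{1..m}. top1 t j permutes {1..m} \<and> top1 t j j = 1)"
  define a where "a = sqrt (real m * real K)"
  have a_props: "a > 0" "1 / \<epsilon> = a" "real K * real m / a = a"
    using H unfolding a_def by (auto simp: real_sqrt_divide real_div_sqrt mult.commute)
  interpret rtop1f_setting m k T K "T div K" a r top1
    using H a_props by unfold_locales auto
  have "T = K * (T div K)" "T \<ge> 1" using H by (auto simp: dvd_div_mult_self)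
  note params = rtop1f_parameters[of m T K "T div K", folded a_def]
  have "real (T div K) * a + real (T div K) * (real K * real m / a) + real K * real m
      = 3 * (real m powr (2/3) * real T powr (2/3))"
    using params \<open>T = K * (T div K)\<close> \<open>T \<ge> 1\<close> H unfolding a_props(3) by simp
  then show "(\<integral>\<omega>. (\<Sum>t\<in>{1..T}. prec_at m k (rtop1f_action m T K top1 r \<omega> t) (r t)) \<partial>rtop1f_space m T K \<epsilon>)
      \<ge> Max {\<Sum>t\<in>{1..T}. prec_at m k \<sigma> (r t) | \<sigma>. \<sigma> permutes {1..m}}
         - 3 * real k * real m powr (2/3) * real T powr (2/3)"
    using expected_gain_ge_Max unfolding gain_def rtop1f_space_eq a_props(2)
    by (simp add: mult.assoc)
qed simp

end
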